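(* Under Conditions 1 and 2, for every $k\in\mathbb Z_+$, $\mathbf y=(y_1,\dots,y_k)\in\mathbb R_+^k$ and $u\in\mathbb R$, $$\lim_{n\to\infty}\int_0^\infty e^{\mathrm iut}R^{(n)}_\beta(\gamma_nt,k,\mathbf y)\,dt=\Big(\sum_{j=1}^ky_j\Big)\int_0^\infty e^{\mathrm iut}\frac1\sigma\exp\Big\{-\Big(\frac{b+m}{\sigma\lambda}+\beta\Big)t\Big\}dt .$$
   Context: Notation: $\mathbb Z_+=\{1,2,\dots\}$, $\mathbb R_+=[0,\infty)$. For each $n\ge1$: $\lambda^{(n)}>0$; a probability $\Lambda^{(n)}$ on $\mathbb R_+$ with tail $\bar\Lambda^{(n)}(t)=\Lambda^{(n)}((t,\infty))$, $\eta^{(n)}=\int_0^\infty y\Lambda^{(n)}(dy)$, $\sigma^{(n)}=\frac12\int_0^\infty y^2\Lambda^{(n)}(dy)$ finite; probability laws $(p_k^{(n)})_{k\ge1}$, $(q_k^{(n)})_{k\ge1}$ on $\mathbb Z_+$ with generating functions $g^{(n)},h^{(n)}$, $m^{(n)}=\sum_kkp_k^{(n)}<\infty$; $\gamma_n>0$ with $\gamma_n\to\infty$, $\gamma_n/n\to\gamma_*\in[0,\infty)$. $\phi^{(n)}(z)=n\gamma_n[g^{(n)}(1-z/n)-(1-z/n)]$, $\psi^{(n)}(z)=\gamma_n[1-h^{(n)}(1-z/n)]$ for $z\in[0,n]$. Condition 1: (i) $\lambda^{(n)}\to\lambda>0$, $\eta^{(n)}\to\eta>0$, $\sigma^{(n)}\to\sigma>0$,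 $\gamma_n(1-\lambda^{(n)}\eta^{(n)})\to b\in\mathbb R$; (ii) $\psi^{(n)}\to\psi$ uniformly on compacts of $[0,\infty)$; (iii) $\{\phi^{(n)}\}$ is uniformly Lipschitz on bounded intervals and converges uniformly on compacts to a continuous $\phi$. Under Condition 1, $\lambda\eta=1$ and $m:=\lim_n\gamma_n(1-m^{(n)})$ exists (so $\gamma_n(1-\lambda^{(n)}\eta^{(n)}m^{(n)})\to b+m$). Condition 2 (for some $\alpha\in(1,2)$): (1) there are $C,k_0>0$ with $n\gamma_n\sum_{k\ge k_0}(k/n)^\alpha p^{(n)}_k+\sum_kk^\alpha q^{(n)}_k\le C$ for all $n$, and $\lim_{k_1\to\infty}\limsup_n\gamma_n\sum_{k\ge k_1}kp^{(n)}_k=0$; (2) there are $C_0>0$ and a probability $\Lambda^*$ on $\mathbb R_+$ with $\int t^{2\alpha}\Lambda^*(dt)<\infty$ and $\bar\Lambda^{(n)}\le C_0\bar\Lambda^*$ for all $n$. Fix $\beta\in[0,\infty)$ with $\beta>-(b+m)/(\sigma\lambda)$. Let $R^{(n)}$ be the unique locally integrable solution of $R^{(n)}(t)=\lambda^{(n)}m^{(n)}\bar\Lambda^{(n)}(t)+\lambda^{(n)}m^{(n)}\int_0^tR^{(n)}(t-s)\bar\Lambda^{(n)}(s)ds$, $t\ge0$, and $R^{(n)}_\beta(t)=e^{-\beta t/\gamma_n}R^{(n)}(t)$. For $k\in\mathbb Z_+$, $\mathbf y=(y_1,\dots,y_k)\in\mathbb R_+^k$: $R^{(n)}(t,k,\mathbf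 y)=\sum_{j=1}^k\big[\lambda^{(n)}\mathbf 1_{\{y_j>t\}}+\lambda^{(n)}\int_0^tR^{(n)}(t-s)\mathbf 1_{\{y_j>s\}}ds\big]$ and $R^{(n)}_\beta(t,k,\mathbf y)=e^{-\beta t/\gamma_n}R^{(n)}(t,k,\mathbf y)$. *)

theory Defs
  imports "HOL-Probability.Probability"
begin

definition tail :: "real measure \<Rightarrow> real \<Rightarrow> real" where
  "tail M t = measure M {t<..}"

definition prob_law_Zplus :: "(nat \<Rightarrow> real) \<Rightarrow> bool" where
  "prob_law_Zplus p \<longleftrightarrow> (\<forall>k. 0 \<le> p k) \<and> p 0 = 0 \<and> p sums 1"

definition genfun :: "(nat \<Rightarrow> real) \<Rightarrow> real \<Rightarrow> real" where
  "genfun p s = (\<Sum>k. p k * s ^ k)"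

definition mean_Z :: "(nat \<Rightarrow> real) \<Rightarrow> real" where
  "mean_Z p = (\<Sum>k. real k * p k)"

definition phi_n :: "nat \<Rightarrow> real \<Rightarrow> (nat \<Rightarrow> real) \<Rightarrow> real \<Rightarrow> real" where
  "phi_n n gam p z = real n * gam * (genfun p (1 - z / real n) - (1 - z / real n))"

definition psi_n :: "nat \<Rightarrow> real \<Rightarrow> (nat \<Rightarrow> real) \<Rightarrow> real \<Rightarrow> real" where
  "psi_n n gam q z = gam * (1 - genfun q (1 - z / real n))"

text \<open>\<open>R(t,k,y) = \<Sum>\<^sub>j\<^sub>=\<^sub>1\<^sup>k [\<lambda> 1{y_j>t} + \<lambda> \<integral>\<^sub>0\<^sup>t R(t-s) 1{y_j>s} ds]\<close>;
  the vector \<open>y \<in> \<real>\<^sub>+\<^sup>k\<close> is a function on nat, only \<open>y 1, ..., y k\<close> matter.\<close>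
definition Rky :: "real \<Rightarrow> (real \<Rightarrow> real) \<Rightarrow> nat \<Rightarrow> (nat \<Rightarrow> real) \<Rightarrow> real \<Rightarrow> real" where
  "Rky lam R k y t =
     (\<Sum>j=1..k. lam * (if y j > t then 1 else 0)
        + lam * set_lebesgue_integral lborel {0..t} (\<lambda>s. R (t - s) * (if y j > s then 1 else 0)))"

definition Rky_beta :: "real \<Rightarrow> real \<Rightarrow> real \<Rightarrow> (real \<Rightarrow> real) \<Rightarrow> nat \<Rightarrow> (nat \<Rightarrow> real) \<Rightarrow> real \<Rightarrow> real" where
  "Rky_beta beta gam lam R k y t = exp (- beta * t / gam) * Rky lam R k y t"

end

theory Submission
  imports Defs
begin

text \<open>
  Pass to Laplace transforms \<open>L f s = \<integral>\<^sub>0\<^sup>\<infinity> exp (-s t) f t dt\<close>. A renewal inequality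
  makes \<open>exp (-a t) R(t)\<close> integrable as soon as \<open>\<lambda> m \<integral>\<^sub>0\<^sup>\<infinity> exp (-a t) tail \<Lambda> t dt < 1\<close>;
  the renewal equation then becomes \<open>(1 + L R) (1 - \<lambda> m L (tail \<Lambda>)) = 1\<close>, which expresses
  \<open>L R(\<cdot>,k,y)\<close> through the transforms of the indicators of \<open>[0,y\<^sub>j)\<close>. Rescaling time by \<open>\<gamma>\<^sub>n\<close>
  turns the integral of the theorem into this transform at \<open>s/\<gamma>\<^sub>n\<close>, \<open>s = \<beta> - iu\<close>, divided by
  \<open>\<gamma>\<^sub>n\<close>. Expanding \<open>exp (-z) = 1 - z + O(min (|z|\<^sup>2) |z|)\<close> under a tail dominated by the tail of
  a law with finite second moment (Condition 2) gives \<open>\<gamma>\<^sub>n (1 - \<lambda> m L (tail \<Lambda>) (s/\<gamma>\<^sub>n)) \<rightarrow> b + m + \<lambda>\<sigma>s\<close>,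
  while the indicator transforms tend to \<open>y\<^sub>j\<close>; the limit \<open>\<lambda> \<Sigma>\<^sub>j y\<^sub>j / (b + m + \<lambda>\<sigma>s)\<close> is the
  Fourier transform on the right-hand side. The convergence of \<open>\<gamma>\<^sub>n (1 - m\<^sup>(\<^sup>n\<^sup>))\<close> itself follows by
  comparing it with \<open>\<phi>\<^sup>(\<^sup>n\<^sup>)(z)/z\<close> for small \<open>z > 0\<close>.
\<close>

lemma pred_in_atLeast[measurable (raw)]:
  assumes [measurable]: "f \<in> borel_measurable M" "g \<in> borel_measurable M"
  shows "Measurable.pred M (\<lambda>x. (f x::real) \<in> {g x..})"
  unfolding atLeast_iff by measurable

lemma pred_in_greaterThan[measurable (raw)]:
  assumes [measurable]: "f \<in> borel_measurable M" "g \<in> borel_measurable M"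
  shows "Measurable.pred M (\<lambda>x. (f x::real) \<in> {g x<..})"
  unfolding greaterThan_iff by measurable

definition L2_lifetime_law :: "real measure \<Rightarrow> bool" where
  "L2_lifetime_law M \<longleftrightarrow> prob_space M \<and> sets M = sets borel \<and> measure M {..<0} = 0
     \<and> integrable M (\<lambda>x. x) \<and> integrable M (\<lambda>x. x ^ 2)"

lemma tail_nonneg: "0 \<le> tail M t"
  by (simp add: tail_def)

lemma tail_antimono:
  assumes "finite_measure M" "sets M = sets borel" "s \<le> t"
  shows "tail M t \<le> tail M s"
  unfolding tail_def using assms by (intro finite_measure.finite_measure_mono) auto

lemma borel_measurable_tail:
  assumes "finite_measure M" "sets M = sets borel"
  shows "tail M \<in> borel_measurable borel"
proof -
  have "mono (\<lambda>t. - tail M t)"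
    using tail_antimono[OF assms] by (auto simp: mono_def)
  then have "(\<lambda>t. - (- tail M t)) \<in> borel_measurable borel"
    by (intro borel_measurable_uminus borel_measurable_mono)
  then show ?thesis by simp
qed

lemma AE_nonneg_of_measure_negative_0:
  assumes "finite_measure M" "sets M = sets borel" "measure M {..<0} = 0"
  shows "AE x in M. 0 \<le> (x::real)"
proof -
  have "{..<0} \<in> null_sets M"
    using assms by (simp add: null_sets_def finite_measure.emeasure_eq_measure)
  from AE_not_in[OF this] show ?thesis by (auto elim: eventually_mono)
qed

lemma nn_integral_weighted_tail:
  fixes M :: "real measure" and w W :: "real \<Rightarrow> real"
  assumes M: "prob_space M" "sets M = sets borel" "measure M {..<0} = 0"
    and [measurable]: "w \<in> borel_measurable borel"
    and w0: "\<And>t. 0 \<le> t \<Longrightarrow> 0 \<le> w t"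
    and W: "\<And>x. 0 \<le> x \<Longrightarrow> (w has_integral W x) {0..x}"
  shows "(\<integral>\<^sup>+t. indicator {0..} t * ennreal (w t * tail M t) \<partial>lborel) = (\<integral>\<^sup>+x. ennreal (W x) \<partial>M)"
proof -
  interpret prob_space M by (rule M(1))
  interpret P: pair_sigma_finite lborel M ..
  have meas: "(\<lambda>(t, x). indicator {0..} t * ennreal (w t) * indicator {t<..} x) \<in> borel_measurable (lborel \<Otimes>\<^sub>M M)"
  proof -
    have "(\<lambda>(t, x). indicator {0..} t * ennreal (w t) * indicator {t<..} (x::real)) \<in> borel_measurable (borel \<Otimes>\<^sub>M borel)"
      by measurable
    then show ?thesis
      by (simp add: measurable_cong_sets[OF sets_pair_measure_cong[OF sets_lborel M(2)] refl])
  qed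
  have "(\<integral>\<^sup>+t. indicator {0..} t * ennreal (w t * tail M t) \<partial>lborel)
      = (\<integral>\<^sup>+t. \<integral>\<^sup>+x. indicator {0..} t * ennreal (w t) * indicator {t<..} x \<partial>M \<partial>lborel)"
  proof (intro nn_integral_cong)
    fix t :: real
    have "{t<..} \<in> sets M" using M(2) by simp
    then have "(\<integral>\<^sup>+x. indicator {0..} t * ennreal (w t) * indicator {t<..} x \<partial>M)
        = indicator {0..} t * ennreal (w t) * emeasure M {t<..}"
      by (subst nn_integral_cmult) auto
    then show "indicator {0..} t * ennreal (w t * tail M t)
        = (\<integral>\<^sup>+x. indicator {0..} t * ennreal (w t) * indicator {t<..} x \<partial>M)"
      using w0[of t] by (cases "0 \<le> t") (simp_all add: tail_def emeasure_eq_measure ennreal_mult)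
  qed
  also have "\<dots> = (\<integral>\<^sup>+x. \<integral>\<^sup>+t. indicator {0..} t * ennreal (w t) * indicator {t<..} x \<partial>lborel \<partial>M)"
    by (rule P.Fubini'[symmetric]) (use meas in simp)
  also have "\<dots> = (\<integral>\<^sup>+x. ennreal (W x) \<partial>M)"
  proof (intro nn_integral_cong_AE)
    show "AE x in M. (\<integral>\<^sup>+t. indicator {0..} t * ennreal (w t) * indicator {t<..} x \<partial>lborel) = ennreal (W x)"
      using AE_nonneg_of_measure_negative_0[OF finite_measure_axioms M(2,3)]
    proof eventually_elim
      fix x :: real assume x: "0 \<le> x"
      have "(\<integral>\<^sup>+t. indicator {0..} t * ennreal (w t) * indicator {t<..} x \<partial>lborel)
          = (\<integral>\<^sup>+t. ennreal (indicator {0..x} t * w t) \<partial>lborel)"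
      proof (intro nn_integral_cong_AE)
        show "AE t in lborel. indicator {0..} t * ennreal (w t) * indicator {t<..} x = ennreal (indicator {0..x} t * w t)"
          using AE_lborel_singleton[of x] by eventually_elim (auto simp: indicator_def)
      qed
      also have "\<dots> = ennreal (W x)"
        by (rule nn_integral_has_integral_lebesgue) (use w0 W x in auto)
      finally show "(\<integral>\<^sup>+t. indicator {0..} t * ennreal (w t) * indicator {t<..} x \<partial>lborel) = ennreal (W x)" .
    qed
  qed
  finally show ?thesis .
qed

lemma set_integral_weighted_tail:
  fixes M :: "real measure" and w W :: "real \<Rightarrow> real"
  assumes M: "prob_space M" "sets M = sets borel" "measure M {..<0} = 0"
    and [measurable]: "w \<in> borel_measurable borel"
    and w0: "\<And>t. 0 \<le> t \<Longrightarrow> 0 \<le> w t"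
    and W: "\<And>x. 0 \<le> x \<Longrightarrow> (w has_integral W x) {0..x}"
    and iW: "integrable M W"
  shows "set_integrable lborel {0..} (\<lambda>t. w t * tail M t)"
    and "set_lebesgue_integral lborel {0..} (\<lambda>t. w t * tail M t) = (\<integral>x. W x \<partial>M)"
proof -
  interpret prob_space M by (rule M(1))
  have [measurable]: "tail M \<in> borel_measurable borel"
    using borel_measurable_tail[OF finite_measure_axioms M(2)] .
  have W0: "AE x in M. 0 \<le> W x"
    using AE_nonneg_of_measure_negative_0[OF finite_measure_axioms M(2,3)]
  proof eventually_elim
    fix x :: real assume "0 \<le> x"
    then show "0 \<le> W x" using w0 by (intro has_integral_nonneg[OF W]) auto
  qed
  have eqn: "(\<integral>\<^sup>+t. ennreal (indicator {0..} t * (w t * tail M t)) \<partial>lborel) = ennreal (\<integral>x. W x \<partial>M)"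
  proof -
    have "(\<integral>\<^sup>+t. ennreal (indicator {0..} t * (w t * tail M t)) \<partial>lborel)
        = (\<integral>\<^sup>+t. indicator {0..} t * ennreal (w t * tail M t) \<partial>lborel)"
      by (intro nn_integral_cong) (simp add: indicator_def)
    also have "\<dots> = (\<integral>\<^sup>+x. ennreal (W x) \<partial>M)"
      by (rule nn_integral_weighted_tail[OF M _ w0 W]) simp
    also have "\<dots> = ennreal (\<integral>x. W x \<partial>M)"
      by (rule nn_integral_eq_integral[OF iW W0])
    finally show ?thesis .
  qed
  have nonneg: "\<And>t. 0 \<le> indicator {0..} t * (w t * tail M t)"
    using w0 by (simp add: indicator_def tail_nonneg)
  show "set_integrable lborel {0..} (\<lambda>t. w t * tail M t)"
    unfolding set_integrable_def
    by (rule integrableI_nonneg) (use eqn nonneg in \<open>auto simp: indicator_def\<close>)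
  have "set_lebesgue_integral lborel {0..} (\<lambda>t. w t * tail M t)
      = enn2real (\<integral>\<^sup>+t. ennreal (indicator {0..} t * (w t * tail M t)) \<partial>lborel)"
    unfolding set_lebesgue_integral_def
    by (subst integral_eq_nn_integral) (use nonneg in \<open>auto simp: indicator_def\<close>)
  also have "\<dots> = (\<integral>x. W x \<partial>M)" using eqn integral_nonneg_AE[OF W0] by simp
  finally show "set_lebesgue_integral lborel {0..} (\<lambda>t. w t * tail M t) = (\<integral>x. W x \<partial>M)" .
qed

lemma integrals_of_tail:
  fixes M :: "real measure"
  assumes "L2_lifetime_law M"
  shows "set_integrable lborel {0..} (tail M)"
    and "set_lebesgue_integral lborel {0..} (tail M) = (\<integral>x. x \<partial>M)"
    and "set_integrable lborel {0..} (\<lambda>t. t * tail M t)"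
    and "set_lebesgue_integral lborel {0..} (\<lambda>t. t * tail M t) = (1/2) * (\<integral>x. x ^ 2 \<partial>M)"
proof -
  have M: "prob_space M" "sets M = sets borel" "measure M {..<0} = 0"
    and i1: "integrable M (\<lambda>x. x)" and i2: "integrable M (\<lambda>x. x ^ 2)"
    using assms by (auto simp: L2_lifetime_law_def)
  have W1: "((\<lambda>t. 1) has_integral x) {0..x}" if "0 \<le> x" for x :: real
    using has_integral_const_real[of "1::real" 0 x] that by simp
  have W2: "((\<lambda>t. t) has_integral x^2 / 2) {0..x}" if "0 \<le> x" for x :: real
    using ident_has_integral[of 0 x] that by simp
  show "set_integrable lborel {0..} (tail M)"
    "set_lebesgue_integral lborel {0..} (tail M) = (\<integral>x. x \<partial>M)"
    using set_integral_weighted_tail[OF M _ _ W1 i1] by simp_all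
  show "set_integrable lborel {0..} (\<lambda>t. t * tail M t)"
    "set_lebesgue_integral lborel {0..} (\<lambda>t. t * tail M t) = (1/2) * (\<integral>x. x ^ 2 \<partial>M)"
    using set_integral_weighted_tail[OF M _ _ W2] i2 by simp_all
qed

lemma borel_measurable_tail_L2_lifetime_law:
  "L2_lifetime_law M \<Longrightarrow> tail M \<in> borel_measurable borel"
  unfolding L2_lifetime_law_def by (intro borel_measurable_tail prob_space.finite_measure) auto

lemma L2_lifetime_law_of_integrable_powr:
  fixes M :: "real measure" and p :: real
  assumes M: "prob_space M" "sets M = sets borel" "measure M {..<0} = 0" and p: "2 \<le> p"
    and ip: "integrable M (\<lambda>t. \<bar>t\<bar> powr p)"
  shows "L2_lifetime_law M"
proof -
  interpret prob_space M by (rule M(1))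
  have meas: "(\<lambda>x::real. x) \<in> borel_measurable M" "(\<lambda>x::real. x ^ 2) \<in> borel_measurable M"
    unfolding measurable_cong_sets[OF M(2) refl] by simp_all
  have sq_le: "x ^ 2 \<le> 1 + \<bar>x\<bar> powr p" for x :: real
  proof (cases "\<bar>x\<bar> \<le> 1")
    case True
    then have "\<bar>x\<bar> ^ 2 \<le> 1" by (intro power_le_one) auto
    then show ?thesis by (simp add: add_increasing2)
  next
    case False
    then have "x ^ 2 = \<bar>x\<bar> powr 2" by (simp add: powr_numeral)
    also have "\<dots> \<le> \<bar>x\<bar> powr p" using False p by (intro powr_mono) auto
    finally show ?thesis by simp
  qed
  have abs_le: "\<bar>x\<bar> \<le> 1 + x ^ 2" for x :: real
  proof (cases "\<bar>x\<bar> \<le> 1")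
    case False
    then have "\<bar>x\<bar> * 1 \<le> \<bar>x\<bar> * \<bar>x\<bar>" by (intro mult_left_mono) auto
    then show ?thesis by (simp add: power2_eq_square)
  qed (simp add: add_increasing2)
  have "integrable M (\<lambda>x. 1 + \<bar>x\<bar> powr p)"
    by (intro Bochner_Integration.integrable_add integrable_const ip)
  then have sq: "integrable M (\<lambda>x. x ^ 2)"
    by (rule Bochner_Integration.integrable_bound[OF _ meas(2)])
       (use sq_le in \<open>auto intro!: AE_I2 simp: add_nonneg_nonneg\<close>)
  have "integrable M (\<lambda>x. 1 + x ^ 2)"
    by (intro Bochner_Integration.integrable_add integrable_const sq)
  then have "integrable M (\<lambda>x. x)"
    by (rule Bochner_Integration.integrable_bound[OF _ meas(1)])
       (use abs_le in \<open>auto intro!: AE_I2 simp: add_nonneg_nonneg\<close>)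
  with M sq show ?thesis by (simp add: L2_lifetime_law_def)
qed

definition laplace :: "(real \<Rightarrow> real) \<Rightarrow> complex \<Rightarrow> complex" where
  "laplace f s = set_lebesgue_integral lborel {0..} (\<lambda>t. exp (- s * of_real t) * of_real (f t))"

lemma laplace_cong: "(\<And>t. 0 \<le> t \<Longrightarrow> f t = g t) \<Longrightarrow> laplace f s = laplace g s"
  unfolding laplace_def by (intro set_lebesgue_integral_cong) auto

lemma set_integrable_laplace_integrand:
  assumes [measurable]: "f \<in> borel_measurable borel"
    and int: "set_integrable lborel {0..} (\<lambda>t. exp (- Re s * t) * \<bar>f t\<bar>)"
  shows "set_integrable lborel {0..} (\<lambda>t. exp (- s * of_real t) * of_real (f t))"
  by (rule set_integrable_bound[OF int]) (auto simp: set_borel_measurable_def norm_mult norm_exp_eq_Re)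

lemma laplace_of_real:
  "laplace f (of_real r) = of_real (set_lebesgue_integral lborel {0..} (\<lambda>t. exp (- r * t) * f t))"
  unfolding laplace_def set_integral_complex_of_real[symmetric]
  by (simp add: exp_of_real[symmetric] mult_ac)

lemma laplace_cmult: "laplace (\<lambda>t. c * f t) s = of_real c * laplace f s"
  unfolding laplace_def set_lebesgue_integral_def
  by (simp add: integral_mult_right_zero[symmetric] mult_ac)

lemma set_integrable_laplace_integrand_cmult:
  fixes s :: complex
  assumes "set_integrable lborel {0..} (\<lambda>t. exp (- s * of_real t) * of_real (f t))"
  shows "set_integrable lborel {0..} (\<lambda>t. exp (- s * of_real t) * of_real (c * f t))"
proof -
  have "set_integrable lborel {0..} (\<lambda>t. of_real c * (exp (- s * of_real t) * of_real (f t)))"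
    using assms by (intro set_integrable_mult_right) simp
  then show ?thesis by (simp add: mult_ac)
qed

lemma laplace_add:
  assumes "set_integrable lborel {0..} (\<lambda>t. exp (- s * of_real t) * of_real (f t))"
    and "set_integrable lborel {0..} (\<lambda>t. exp (- s * of_real t) * of_real (g t))"
  shows "laplace (\<lambda>t. f t + g t) s = laplace f s + laplace g s"
  unfolding laplace_def using set_integral_add(2)[OF assms] by (simp add: distrib_left)

lemma laplace_sum:
  assumes "\<And>i. i \<in> I \<Longrightarrow> set_integrable lborel {0..} (\<lambda>t. exp (- s * of_real t) * of_real (f i t))"
  shows "laplace (\<lambda>t. \<Sum>i\<in>I. f i t) s = (\<Sum>i\<in>I. laplace (f i) s)"
proof -
  have "laplace (\<lambda>t. \<Sum>i\<in>I. f i t) s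
      = (\<integral>t. (\<Sum>i\<in>I. indicator {0..} t *\<^sub>R (exp (- s * of_real t) * of_real (f i t))) \<partial>lborel)"
    unfolding laplace_def set_lebesgue_integral_def by (simp add: scaleR_sum_right sum_distrib_left)
  also have "\<dots> = (\<Sum>i\<in>I. laplace (f i) s)"
    unfolding laplace_def set_lebesgue_integral_def
    by (rule Bochner_Integration.integral_sum) (use assms in \<open>simp add: set_integrable_def\<close>)
  finally show ?thesis .
qed

lemma laplace_const_1:
  fixes z :: complex assumes z: "0 < Re z"
  shows "set_integrable lborel {0..} (\<lambda>t. exp (- z * of_real t))"
    and "laplace (\<lambda>_. 1) z = 1 / z"
proof -
  have "integrable lebesgue (\<lambda>t. indicat_real {0..} t *\<^sub>R exp (- Re z * t))"
    using z by (intro nonnegative_absolutely_integrable_1[unfolded set_integrable_def]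
        integrable_on_exp_minus_to_infinity) auto
  then have exp_int: "set_integrable lborel {0..} (\<lambda>t. exp (- Re z * t))"
    unfolding set_integrable_def by (subst (asm) integrable_completion) auto
  show int: "set_integrable lborel {0..} (\<lambda>t. exp (- z * of_real t))"
    using set_integrable_laplace_integrand[of "\<lambda>_. 1" z] exp_int by simp
  have z0: "z \<noteq> 0" using z by auto
  have segment: "set_lebesgue_integral lborel {0..b} (\<lambda>t. exp (- z * of_real t)) = (1 - exp (- z * of_real b)) / z"
    if b: "0 \<le> b" for b
  proof -
    have deriv: "((\<lambda>t. - exp (- z * of_real t) / z) has_vector_derivative exp (- z * of_real t)) (at t within {0..b})" for t
      using z0 by (auto intro!: derivative_eq_intros has_complex_derivative_imp_has_vector_derivative[unfolded o_def])
    have "set_lebesgue_integral lborel {0..b} (\<lambda>t. exp (- z * of_real t)) = integral {0..b} (\<lambda>t. exp (- z * of_real t))"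
      by (rule set_borel_integral_eq_integral(2))
         (auto simp: set_integrable_def intro!: borel_integrable_compact continuous_intros)
    also have "\<dots> = (1 - exp (- z * of_real b)) / z"
      by (rule integral_unique, rule fundamental_theorem_of_calculus[OF b deriv, THEN has_integral_eq_rhs])
         (use z0 in \<open>simp add: field_simps\<close>)
    finally show ?thesis .
  qed
  have "((\<lambda>b. set_lebesgue_integral lborel {0..b} (\<lambda>t. exp (- z * of_real t))) \<longlongrightarrow> laplace (\<lambda>_. 1) z) at_top"
    unfolding laplace_def using tendsto_set_lebesgue_integral_at_top[OF _ int] by simp
  moreover have "((\<lambda>b. set_lebesgue_integral lborel {0..b} (\<lambda>t. exp (- z * of_real t))) \<longlongrightarrow> 1 / z) at_top"
  proof -
    have "((\<lambda>b. exp (- Re z * b)) \<longlongrightarrow> 0) at_top"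
      using z by (intro filterlim_compose[OF exp_at_bot] filterlim_tendsto_neg_mult_at_bot[OF tendsto_const]
          filterlim_ident) auto
    also have "(\<lambda>b. exp (- Re z * b)) = (\<lambda>b. norm (exp (- z * of_real b)))"
      by (simp add: norm_exp_eq_Re)
    finally have "((\<lambda>b::real. exp (- z * of_real b)) \<longlongrightarrow> 0) at_top"
      by (rule tendsto_norm_zero_cancel)
    then have "((\<lambda>b. (1 - exp (- z * of_real b)) / z) \<longlongrightarrow> (1 - 0) / z) at_top"
      using z0 by (intro tendsto_intros)
    moreover have "\<forall>\<^sub>F b in at_top. (1 - exp (- z * of_real b)) / z
        = set_lebesgue_integral lborel {0..b} (\<lambda>t. exp (- z * of_real t))"
      using eventually_ge_at_top[of "0::real"] by eventually_elim (rule segment[symmetric])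
    ultimately show ?thesis by (auto intro: Lim_transform_eventually)
  qed
  ultimately show "laplace (\<lambda>_. 1) z = 1 / z"
    using tendsto_unique[OF trivial_limit_at_top_linorder] by blast
qed

lemma nn_integral_half_line_convolution:
  fixes F G :: "real \<Rightarrow> ennreal"
  assumes [measurable]: "F \<in> borel_measurable borel" "G \<in> borel_measurable borel"
  shows "(\<integral>\<^sup>+t. \<integral>\<^sup>+v. indicator {0..} v * indicator {v..} t * F (t - v) * G v \<partial>lborel \<partial>lborel)
        = (\<integral>\<^sup>+w. indicator {0..} w * F w \<partial>lborel) * (\<integral>\<^sup>+v. indicator {0..} v * G v \<partial>lborel)"
proof -
  have "(\<lambda>(v,t). indicator {0..} v * indicator {v..} t * F (t - v) * G v) \<in> borel_measurable (borel \<Otimes>\<^sub>M borel)"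
    unfolding indicator_def atLeast_iff by measurable
  then have "(\<integral>\<^sup>+t. \<integral>\<^sup>+v. indicator {0..} v * indicator {v..} t * F (t - v) * G v \<partial>lborel \<partial>lborel)
     = (\<integral>\<^sup>+v. \<integral>\<^sup>+t. indicator {0..} v * indicator {v..} t * F (t - v) * G v \<partial>lborel \<partial>lborel)"
    by (intro lborel_pair.Fubini') simp
  also have "\<dots> = (\<integral>\<^sup>+v. (indicator {0..} v * G v) * (\<integral>\<^sup>+w. indicator {0..} w * F w \<partial>lborel) \<partial>lborel)"
  proof (rule nn_integral_cong)
    fix v :: real
    have "(\<integral>\<^sup>+t. indicator {v..} t * F (t - v) \<partial>lborel)
        = (\<integral>\<^sup>+w. indicator {v..} (v + 1 * w) * F ((v + 1 * w) - v) \<partial>lborel)"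
      using nn_integral_real_affine[of "\<lambda>t. indicator {v..} t * F (t - v)" 1 v] by simp
    also have "\<dots> = (\<integral>\<^sup>+w. indicator {0..} w * F w \<partial>lborel)"
      by (intro nn_integral_cong) (simp add: indicator_def)
    finally have shift: "(\<integral>\<^sup>+t. indicator {v..} t * F (t - v) \<partial>lborel) = (\<integral>\<^sup>+w. indicator {0..} w * F w \<partial>lborel)" .
    have "(\<integral>\<^sup>+t. indicator {0..} v * indicator {v..} t * F (t - v) * G v \<partial>lborel)
        = (\<integral>\<^sup>+t. (indicator {0..} v * G v) * (indicator {v..} t * F (t - v)) \<partial>lborel)"
      by (intro nn_integral_cong) (simp add: mult_ac)
    also have "\<dots> = (indicator {0..} v * G v) * (\<integral>\<^sup>+t. indicator {v..} t * F (t - v) \<partial>lborel)"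
      by (rule nn_integral_cmult) measurable
    finally show "(\<integral>\<^sup>+t. indicator {0..} v * indicator {v..} t * F (t - v) * G v \<partial>lborel)
        = (indicator {0..} v * G v) * (\<integral>\<^sup>+w. indicator {0..} w * F w \<partial>lborel)"
      unfolding shift .
  qed
  also have "\<dots> = (\<integral>\<^sup>+v. indicator {0..} v * G v \<partial>lborel) * (\<integral>\<^sup>+w. indicator {0..} w * F w \<partial>lborel)"
    by (rule nn_integral_multc) measurable
  finally show ?thesis by (simp add: mult.commute)
qed

lemma nn_integral_exp_weighted_less_top:
  assumes "set_integrable lborel {0..} (\<lambda>t. exp (- a * t) * \<bar>f t\<bar>)"
  shows "(\<integral>\<^sup>+t. indicator {0..} t * ennreal (exp (- a * t) * \<bar>f t\<bar>) \<partial>lborel) < \<infinity>"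
proof -
  have "(\<integral>\<^sup>+t. indicator {0..} t * ennreal (exp (- a * t) * \<bar>f t\<bar>) \<partial>lborel)
      = (\<integral>\<^sup>+t. ennreal (norm (indicat_real {0..} t *\<^sub>R (exp (- a * t) * \<bar>f t\<bar>))) \<partial>lborel)"
    by (intro nn_integral_cong) (simp add: indicator_def)
  also have "\<dots> < \<infinity>"
    using assms unfolding set_integrable_def integrable_iff_bounded by simp
  finally show ?thesis .
qed

lemma laplace_convolution:
  fixes R g :: "real \<Rightarrow> real" and s :: complex
  assumes [measurable]: "R \<in> borel_measurable borel" "g \<in> borel_measurable borel"
    and iR: "set_integrable lborel {0..} (\<lambda>t. exp (- Re s * t) * \<bar>R t\<bar>)"
    and ig: "set_integrable lborel {0..} (\<lambda>t. exp (- Re s * t) * \<bar>g t\<bar>)"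
  shows "set_integrable lborel {0..}
           (\<lambda>t. exp (- s * of_real t) * of_real (set_lebesgue_integral lborel {0..t} (\<lambda>v. R (t - v) * g v)))"
    and "laplace (\<lambda>t. set_lebesgue_integral lborel {0..t} (\<lambda>v. R (t - v) * g v)) s = laplace R s * laplace g s"
proof -
  define a where "a = Re s"
  define H where "H t v = (indicator {0..} v * indicator {v..} t :: real) *\<^sub>R
                            (exp (- s * of_real t) * of_real (R (t - v) * g v))" for t v
  have Hm[measurable]: "case_prod H \<in> borel_measurable (lborel \<Otimes>\<^sub>M lborel)"
    unfolding H_def by measurable
  have norm_H: "ennreal (norm (H t v)) = indicator {0..} v * indicator {v..} t
      * ennreal (exp (- a * (t - v)) * \<bar>R (t - v)\<bar>) * ennreal (exp (- a * v) * \<bar>g v\<bar>)" for t v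
  proof -
    have "exp (- (a * t)) = exp (- (a * v)) * exp (- (a * (t - v)))"
      by (simp add: exp_add[symmetric] algebra_simps)
    then show ?thesis unfolding H_def
      by (simp add: norm_mult norm_exp_eq_Re abs_mult a_def[symmetric] ennreal_mult[symmetric] indicator_def mult_ac)
  qed
  have Hint: "integrable (lborel \<Otimes>\<^sub>M lborel) (case_prod H)"
  proof (rule integrableI_bounded)
    have "(\<integral>\<^sup>+p. ennreal (norm (case_prod H p)) \<partial>(lborel \<Otimes>\<^sub>M lborel))
        = (\<integral>\<^sup>+t. \<integral>\<^sup>+v. ennreal (norm (H t v)) \<partial>lborel \<partial>lborel)"
      using lborel.nn_integral_fst[of "\<lambda>p. ennreal (norm (case_prod H p))"] by simp
    also have "\<dots> = (\<integral>\<^sup>+t. indicator {0..} t * ennreal (exp (- a * t) * \<bar>R t\<bar>) \<partial>lborel)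
                   * (\<integral>\<^sup>+t. indicator {0..} t * ennreal (exp (- a * t) * \<bar>g t\<bar>) \<partial>lborel)"
      unfolding norm_H by (rule nn_integral_half_line_convolution) measurable
    also have "\<dots> < \<infinity>"
      using nn_integral_exp_weighted_less_top[OF iR] nn_integral_exp_weighted_less_top[OF ig]
      by (simp add: a_def ennreal_mult_less_top)
    finally show "(\<integral>\<^sup>+p. ennreal (norm (case_prod H p)) \<partial>(lborel \<Otimes>\<^sub>M lborel)) < \<infinity>" .
  qed simp
  have inner_v: "(\<integral>v. H t v \<partial>lborel) = indicator {0..} t *\<^sub>R
      (exp (- s * of_real t) * of_real (set_lebesgue_integral lborel {0..t} (\<lambda>v. R (t - v) * g v)))" for t
  proof -
    have "(\<integral>v. H t v \<partial>lborel)
        = (\<integral>v. exp (- s * of_real t) * of_real (indicator {0..t} v *\<^sub>R (R (t - v) * g v)) \<partial>lborel)"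
      unfolding H_def by (intro Bochner_Integration.integral_cong) (auto simp: indicator_def)
    also have "\<dots> = exp (- s * of_real t) * of_real (set_lebesgue_integral lborel {0..t} (\<lambda>v. R (t - v) * g v))"
      by (simp only: integral_mult_right_zero set_lebesgue_integral_def integral_complex_of_real)
    finally show ?thesis
      by (cases "0 \<le> t") (auto simp: indicator_def set_lebesgue_integral_def)
  qed
  have inner_t: "(\<integral>t. H t v \<partial>lborel) = (indicator {0..} v *\<^sub>R (exp (- s * of_real v) * of_real (g v))) * laplace R s" for v
  proof -
    have "(\<integral>t. H t v \<partial>lborel) = \<bar>1\<bar> *\<^sub>R (\<integral>x. H (v + 1 * x) v \<partial>lborel)"
      by (rule lborel_integral_real_affine) simp
    also have "\<dots> = (\<integral>x. (indicator {0..} v *\<^sub>R (exp (- s * of_real v) * of_real (g v)))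
                       * (indicator {0..} x *\<^sub>R (exp (- s * of_real x) * of_real (R x))) \<partial>lborel)"
      unfolding H_def by (simp add: indicator_def exp_add[symmetric] algebra_simps)
    also have "\<dots> = (indicator {0..} v *\<^sub>R (exp (- s * of_real v) * of_real (g v))) * laplace R s"
      by (simp only: integral_mult_right_zero laplace_def set_lebesgue_integral_def)
    finally show ?thesis .
  qed
  show "set_integrable lborel {0..}
      (\<lambda>t. exp (- s * of_real t) * of_real (set_lebesgue_integral lborel {0..t} (\<lambda>v. R (t - v) * g v)))"
    using lborel_pair.integrable_fst[OF Hint] unfolding set_integrable_def inner_v .
  have "laplace (\<lambda>t. set_lebesgue_integral lborel {0..t} (\<lambda>v. R (t - v) * g v)) s
      = (\<integral>t. \<integral>v. H t v \<partial>lborel \<partial>lborel)"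
    unfolding laplace_def set_lebesgue_integral_def inner_v ..
  also have "\<dots> = (\<integral>v. (indicator {0..} v *\<^sub>R (exp (- s * of_real v) * of_real (g v))) * laplace R s \<partial>lborel)"
    unfolding lborel_pair.Fubini_integral[OF Hint, symmetric] inner_t ..
  also have "\<dots> = laplace g s * laplace R s"
    by (simp only: integral_mult_left_zero laplace_def set_lebesgue_integral_def)
  finally show "laplace (\<lambda>t. set_lebesgue_integral lborel {0..t} (\<lambda>v. R (t - v) * g v)) s
      = laplace R s * laplace g s"
    by (simp add: mult.commute)
qed

lemma laplace_rescale:
  fixes G :: "real \<Rightarrow> real" and g \<beta> u :: real
  assumes g: "0 < g"
  shows "set_lebesgue_integral lborel {0..}
           (\<lambda>t. exp (\<i> * complex_of_real (u * t)) * complex_of_real (exp (- \<beta> * (g * t) / g) * G (g * t)))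
       = laplace G ((of_real \<beta> - \<i> * of_real u) / of_real g) / of_real g"
proof -
  define f where "f \<tau> = indicator {0..} \<tau> *\<^sub>R
      (exp (- ((of_real \<beta> - \<i> * of_real u) / of_real g) * of_real \<tau>) * complex_of_real (G \<tau>))" for \<tau>
  have "(\<integral>\<tau>. f \<tau> \<partial>lborel) = \<bar>g\<bar> *\<^sub>R (\<integral>x. f (0 + g * x) \<partial>lborel)"
    by (rule lborel_integral_real_affine) (use g in auto)
  also have "(\<lambda>x. f (0 + g * x)) = (\<lambda>t. indicator {0..} t *\<^sub>R
      (exp (\<i> * complex_of_real (u * t)) * complex_of_real (exp (- \<beta> * (g * t) / g) * G (g * t))))"
  proof
    fix t :: real
    have "- ((of_real \<beta> - \<i> * of_real u) / of_real g) * of_real (g * t)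
        = \<i> * complex_of_real (u * t) + complex_of_real (- \<beta> * (g * t) / g)"
      using g by (simp add: field_simps)
    then have "exp (- ((of_real \<beta> - \<i> * of_real u) / of_real g) * of_real (g * t))
        = exp (\<i> * complex_of_real (u * t)) * complex_of_real (exp (- \<beta> * (g * t) / g))"
      by (simp only: exp_add exp_of_real)
    moreover have "indicator {0..} (g * t) = (indicator {0..} t :: real)"
      using g by (simp add: indicator_def zero_le_mult_iff)
    ultimately show "f (0 + g * t) = indicator {0..} t *\<^sub>R
        (exp (\<i> * complex_of_real (u * t)) * complex_of_real (exp (- \<beta> * (g * t) / g) * G (g * t)))"
      unfolding f_def add_0_left by (simp add: mult_ac)
  qed
  finally show ?thesis
    using g by (simp add: laplace_def set_lebesgue_integral_def f_def[abs_def] scaleR_conv_of_real field_simps)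
qed

lemma laplace_step_tendsto:
  fixes s :: "nat \<Rightarrow> complex" and y :: real
  assumes s: "s \<longlonglongrightarrow> 0" and y: "0 \<le> y"
  shows "(\<lambda>n. laplace (\<lambda>t. if y > t then 1 else 0) (s n)) \<longlonglongrightarrow> of_real y"
proof -
  define g where "g t = (if y > t then 1 else (0::real))" for t
  have [measurable]: "g \<in> borel_measurable borel" unfolding g_def by measurable
  obtain B where B: "\<And>n. norm (s n) \<le> B"
    using convergent_imp_Bseq[OF convergentI[OF s]] by (metis BseqE)
  have "(\<lambda>n. \<integral>t. indicator {0..} t *\<^sub>R (exp (- s n * of_real t) * of_real (g t)) \<partial>lborel)
      \<longlonglongrightarrow> (\<integral>t. indicator {0..} t *\<^sub>R (1 * of_real (g t)) \<partial>lborel)"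
  proof (rule integral_dominated_convergence[where w="\<lambda>t. indicator {0..y} t *\<^sub>R exp (B * y)"])
    show "integrable lborel (\<lambda>t. indicator {0..y} t *\<^sub>R exp (B * y))"
      by (rule borel_integrable_compact) auto
    show "AE t in lborel. (\<lambda>n. indicator {0..} t *\<^sub>R (exp (- s n * of_real t) * of_real (g t)))
        \<longlonglongrightarrow> indicator {0..} t *\<^sub>R (1 * complex_of_real (g t))"
    proof (intro AE_I2)
      fix t :: real
      have "(\<lambda>n. exp (- s n * of_real t)) \<longlonglongrightarrow> exp (- 0 * of_real t)"
        by (intro tendsto_intros s)
      then show "(\<lambda>n. indicator {0..} t *\<^sub>R (exp (- s n * of_real t) * of_real (g t)))
          \<longlonglongrightarrow> indicator {0..} t *\<^sub>R (1 * complex_of_real (g t))"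
        by (intro tendsto_intros) simp
    qed
    show "AE t in lborel. norm (indicator {0..} t *\<^sub>R (exp (- s n * of_real t) * of_real (g t)))
        \<le> indicator {0..y} t *\<^sub>R exp (B * y)" for n
    proof (intro AE_I2)
      fix t :: real
      show "norm (indicator {0..} t *\<^sub>R (exp (- s n * of_real t) * of_real (g t))) \<le> indicator {0..y} t *\<^sub>R exp (B * y)"
      proof (cases "0 \<le> t \<and> t < y")
        case True
        have B0: "0 \<le> B" using order_trans[OF norm_ge_zero B[of n]] .
        have "- Re (s n) \<le> B" using abs_Re_le_cmod[of "s n"] B[of n] by linarith
        then have "- Re (s n) * t \<le> B * t" using True by (intro mult_right_mono) auto
        also have "\<dots> \<le> B * y" using True B0 by (intro mult_left_mono) auto
        finally show ?thesis using True by (simp add: g_def indicator_def norm_mult norm_exp_eq_Re)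
      qed (auto simp: g_def indicator_def)
    qed
  qed measurable
  moreover have "(\<lambda>t. indicator {0..} t *\<^sub>R (1 * complex_of_real (g t))) = (\<lambda>t. complex_of_real (indicator {0..<y} t))"
    by (auto simp: fun_eq_iff indicator_def g_def)
  ultimately show ?thesis using y by (simp add: laplace_def set_lebesgue_integral_def g_def)
qed

lemma norm_exp_minus_sub_1_le:
  fixes z :: complex assumes z: "0 \<le> Re z"
  shows "norm (exp (- z) - 1) \<le> norm z"
proof -
  have "norm ((\<lambda>w. exp (- w)) z - (\<lambda>w. exp (- w)) 0) \<le> 1 * norm (z - 0)"
  proof (rule field_differentiable_bound[where S="closed_segment 0 z" and f'="\<lambda>w. - exp (- w)"])
    fix w assume "w \<in> closed_segment 0 z"
    then obtain u where "0 \<le> u" "w = u *\<^sub>R z" by (auto simp: in_segment)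
    then show "norm (- exp (- w)) \<le> 1" using z by (simp add: norm_exp_eq_Re)
  qed (auto intro!: derivative_eq_intros)
  then show ?thesis by simp
qed

lemma norm_exp_minus_sub_1_add_le:
  fixes z :: complex assumes z: "0 \<le> Re z"
  shows "norm (exp (- z) - 1 + z) \<le> min (norm z ^ 2) (2 * norm z)"
proof -
  have "norm ((\<lambda>w. exp (- w) - 1 + w) z - (\<lambda>w. exp (- w) - 1 + w) 0) \<le> norm z * norm (z - 0)"
  proof (rule field_differentiable_bound[where S="closed_segment 0 z" and f'="\<lambda>w. 1 - exp (- w)"])
    fix w assume "w \<in> closed_segment 0 z"
    then obtain u where u: "0 \<le> u" "u \<le> 1" "w = u *\<^sub>R z" by (auto simp: in_segment)
    have "norm (1 - exp (- w)) = norm (exp (- w) - 1)" by (simp add: norm_minus_commute)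
    also have "\<dots> \<le> norm w" using u z by (intro norm_exp_minus_sub_1_le) simp
    also have "\<dots> \<le> norm z" using u by (simp add: mult_left_le_one_le)
    finally show "norm (1 - exp (- w)) \<le> norm z" .
  qed (auto intro!: derivative_eq_intros)
  moreover have "norm (exp (- z) - 1 + z) \<le> 2 * norm z"
    using norm_triangle_ineq[of "exp (- z) - 1" z] norm_exp_minus_sub_1_le[OF z] by simp
  ultimately show ?thesis by (simp add: power2_eq_square)
qed

lemma set_integrable_exp_tail:
  assumes M: "L2_lifetime_law M" and a: "0 \<le> a"
  shows "set_integrable lborel {0..} (\<lambda>t. exp (- a * t) * \<bar>tail M t\<bar>)"
proof (rule set_integrable_bound[OF integrals_of_tail(1)[OF M]])
  have [measurable]: "tail M \<in> borel_measurable borel"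
    by (rule borel_measurable_tail_L2_lifetime_law[OF M])
  show "set_borel_measurable lborel {0..} (\<lambda>t. exp (- a * t) * \<bar>tail M t\<bar>)"
    unfolding set_borel_measurable_def by measurable
  show "AE t in lborel. t \<in> {0..} \<longrightarrow> norm (exp (- a * t) * \<bar>tail M t\<bar>) \<le> norm (tail M t)"
    using a by (intro AE_I2) (auto simp: abs_mult mult_left_le_one_le)
qed

lemma laplace_tail_expansion:
  fixes M :: "real measure" and s :: complex
  assumes M: "L2_lifetime_law M" and s: "0 \<le> Re s"
  shows "set_integrable lborel {0..} (\<lambda>t. min ((norm s * t)^2) (2 * (norm s * t)) * tail M t)"
    and "norm (laplace (tail M) s - (of_real (\<integral>x. x \<partial>M) - s * of_real ((1/2) * (\<integral>x. x ^ 2 \<partial>M))))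
         \<le> set_lebesgue_integral lborel {0..} (\<lambda>t. min ((norm s * t)^2) (2 * (norm s * t)) * tail M t)"
proof -
  note moments = integrals_of_tail[OF M]
  have [measurable]: "tail M \<in> borel_measurable borel"
    by (rule borel_measurable_tail_L2_lifetime_law[OF M])
  have c1: "set_integrable lborel {0..} (\<lambda>t. complex_of_real (tail M t))"
    using moments(1) unfolding set_integrable_def
    by (simp add: complex_of_real_integrable_eq[symmetric] scaleR_conv_of_real)
  have c2: "set_integrable lborel {0..} (\<lambda>t. complex_of_real (t * tail M t))"
    using moments(3) unfolding set_integrable_def
    by (simp add: complex_of_real_integrable_eq[symmetric] scaleR_conv_of_real)
  have A: "set_integrable lborel {0..} (\<lambda>t. exp (- s * of_real t) * of_real (tail M t))"
    by (rule set_integrable_laplace_integrand[OF _ set_integrable_exp_tail[OF M s]]) measurable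
  define err where "err t = min ((norm s * t)^2) (2 * (norm s * t)) * tail M t" for t
  show B: "set_integrable lborel {0..} err"
  proof (rule set_integrable_bound[OF set_integrable_mult_right[of "2 * norm s", OF moments(3)]])
    show "set_borel_measurable lborel {0..} err"
      unfolding set_borel_measurable_def err_def by measurable
    show "AE t in lborel. t \<in> {0..} \<longrightarrow> norm (err t) \<le> norm (2 * norm s * (t * tail M t))"
    proof (intro AE_I2 impI)
      fix t :: real assume "t \<in> {0..}"
      then have "0 \<le> err t" by (simp add: err_def tail_nonneg)
      moreover have "err t \<le> (2 * (norm s * t)) * tail M t"
        unfolding err_def by (rule mult_right_mono[OF min.cobounded2 tail_nonneg])
      ultimately have "err t \<le> 2 * norm s * (t * tail M t)" and "0 \<le> err t" by (simp_all add: mult_ac)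
      then show "norm (err t) \<le> norm (2 * norm s * (t * tail M t))" by simp
    qed
  qed
  define f where "f t = (exp (- s * of_real t) - 1 + s * of_real t) * of_real (tail M t)" for t
  have f_eq: "f t = exp (- s * of_real t) * of_real (tail M t) - of_real (tail M t) + s * of_real (t * tail M t)" for t
    by (simp add: f_def algebra_simps)
  have fi: "set_integrable lborel {0..} f"
    unfolding f_eq using A c1 c2 by (intro set_integral_add set_integral_diff set_integrable_mult_right)
  have "set_lebesgue_integral lborel {0..} f = laplace (tail M) s
      - set_lebesgue_integral lborel {0..} (\<lambda>t. complex_of_real (tail M t))
      + s * set_lebesgue_integral lborel {0..} (\<lambda>t. complex_of_real (t * tail M t))"
    unfolding f_eq laplace_def using A c1 c2
    by (simp add: set_integral_add set_integral_diff set_integrable_mult_right del: of_real_mult)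
  also have "\<dots> = laplace (tail M) s - (of_real (\<integral>x. x \<partial>M) - s * of_real ((1/2) * (\<integral>x. x ^ 2 \<partial>M)))"
    by (simp only: set_integral_complex_of_real moments(2) moments(4)) simp
  finally have "set_lebesgue_integral lborel {0..} f
      = laplace (tail M) s - (of_real (\<integral>x. x \<partial>M) - s * of_real ((1/2) * (\<integral>x. x ^ 2 \<partial>M)))" .
  moreover have "norm (set_lebesgue_integral lborel {0..} f) \<le> set_lebesgue_integral lborel {0..} err"
  proof (rule order_trans[OF set_integral_norm_bound[OF fi] set_integral_mono_AE])
    show "set_integrable lborel {0..} (\<lambda>t. norm (f t))"
      using fi by (rule set_integrable_norm)
    show "set_integrable lborel {0..} err" by (rule B)
    show "AE t in lborel. t \<in> {0..} \<longrightarrow> norm (f t) \<le> err t"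
    proof (intro AE_I2 impI)
      fix t :: real assume t: "t \<in> {0..}"
      have "norm (exp (- (s * of_real t)) - 1 + s * of_real t) \<le> min ((norm s * t)^2) (2 * (norm s * t))"
        using norm_exp_minus_sub_1_add_le[of "s * of_real t"] s t by (simp add: norm_mult)
      then show "norm (f t) \<le> err t"
        unfolding f_def err_def by (simp add: norm_mult tail_nonneg mult_right_mono)
    qed
  qed
  ultimately show "norm (laplace (tail M) s - (of_real (\<integral>x. x \<partial>M) - s * of_real ((1/2) * (\<integral>x. x ^ 2 \<partial>M))))
      \<le> set_lebesgue_integral lborel {0..} (\<lambda>t. min ((norm s * t)^2) (2 * (norm s * t)) * tail M t)"
    by (simp add: err_def[abs_def])
qed

lemma tail_expansion_error_tendsto_0:
  fixes M :: "real measure" and a :: "nat \<Rightarrow> real" and c :: real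
  assumes M: "L2_lifetime_law M" and a: "\<And>n. 0 \<le> a n" "a \<longlonglongrightarrow> 0" and c: "0 \<le> c"
  shows "(\<lambda>n. set_lebesgue_integral lborel {0..} (\<lambda>t. min (c^2 * t^2 * a n) (2 * c * t) * tail M t)) \<longlonglongrightarrow> 0"
proof -
  have [measurable]: "tail M \<in> borel_measurable borel"
    by (rule borel_measurable_tail_L2_lifetime_law[OF M])
  define S where "S n t = indicator {0..} t * (min (c^2 * t^2 * a n) (2 * c * t) * tail M t)" for n t
  have S_nonneg: "0 \<le> min (c^2 * t^2 * a n) (2 * c * t) * tail M t" if "0 \<le> t" for n t
    using that a(1)[of n] c by (simp add: tail_nonneg)
  define w where "w t = 2 * c * (indicator {0..} t * (t * tail M t))" for t
  have w: "integrable lborel w"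
    using integrals_of_tail(3)[OF M] unfolding set_integrable_def w_def by (intro integrable_mult_right) simp
  have lim: "AE t in lborel. (\<lambda>n. S n t) \<longlonglongrightarrow> 0"
  proof (intro AE_I2)
    fix t :: real
    show "(\<lambda>n. S n t) \<longlonglongrightarrow> 0"
    proof (cases "0 \<le> t")
      case True
      have upper: "(\<lambda>n. c^2 * t^2 * a n) \<longlonglongrightarrow> 0"
        using tendsto_mult[OF tendsto_const a(2), of "c^2 * t^2"] by simp
      have lower: "\<forall>\<^sub>F n in sequentially. 0 \<le> min (c^2 * t^2 * a n) (2 * c * t)"
        and below: "\<forall>\<^sub>F n in sequentially. min (c^2 * t^2 * a n) (2 * c * t) \<le> c^2 * t^2 * a n"
        using True a(1) c by (auto intro!: always_eventually)
      have "(\<lambda>n. min (c^2 * t^2 * a n) (2 * c * t)) \<longlonglongrightarrow> 0"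
        by (rule tendsto_sandwich[OF lower below tendsto_const upper])
      then have "(\<lambda>n. indicator {0..} t * (min (c^2 * t^2 * a n) (2 * c * t) * tail M t))
          \<longlonglongrightarrow> indicator {0..} t * (0 * tail M t)"
        by (intro tendsto_mult tendsto_const)
      then show ?thesis by (simp add: S_def)
    qed (simp add: S_def)
  qed
  have bound: "AE t in lborel. norm (S n t) \<le> w t" for n
  proof (intro AE_I2)
    fix t :: real
    have "min (c^2 * t^2 * a n) (2 * c * t) * tail M t \<le> (2 * c * t) * tail M t"
      by (rule mult_right_mono[OF min.cobounded2 tail_nonneg])
    then show "norm (S n t) \<le> w t"
      using S_nonneg[of t n] by (simp add: S_def w_def indicator_def mult_ac)
  qed
  have "(\<lambda>n. integral\<^sup>L lborel (S n)) \<longlonglongrightarrow> integral\<^sup>L lborel (\<lambda>_::real. 0 :: real)"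
  proof (rule integral_dominated_convergence[OF _ _ w])
    show "(\<lambda>_::real. 0 :: real) \<in> borel_measurable lborel" "S n \<in> borel_measurable lborel" for n
      unfolding S_def by measurable
  qed (use lim bound in simp_all)
  then show ?thesis by (simp add: set_lebesgue_integral_def S_def[abs_def])
qed

lemma laplace_tail_rescaled_expansion:
  fixes M :: "nat \<Rightarrow> real measure" and Ls :: "real measure" and gam :: "nat \<Rightarrow> real" and s :: complex
  assumes M: "\<forall>\<^sub>F n in sequentially. L2_lifetime_law (M n)" and Ls: "L2_lifetime_law Ls"
    and dom: "\<forall>\<^sub>F n in sequentially. \<forall>t\<ge>0. tail (M n) t \<le> C0 * tail Ls t"
    and gam: "filterlim gam at_top sequentially" and s: "0 \<le> Re s"
  shows "(\<lambda>n. of_real (gam n) * (laplace (tail (M n)) (s / of_real (gam n))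
            - (of_real (\<integral>x. x \<partial>M n) - s / of_real (gam n) * of_real ((1/2) * (\<integral>x. x ^ 2 \<partial>M n)))))
         \<longlonglongrightarrow> 0"
proof (rule Lim_null_comparison)
  define c where "c = norm s"
  \<comment> \<open>The absolute value only makes the error term well behaved for the finitely many \<open>n\<close> with \<open>gam n \<le> 0\<close>.\<close>
  define a where "a n = \<bar>inverse (gam n)\<bar>" for n
  define err where "err n = set_lebesgue_integral lborel {0..} (\<lambda>t. min (c^2 * t^2 * a n) (2 * c * t) * tail Ls t)" for n
  have a_lim: "a \<longlonglongrightarrow> 0"
    unfolding a_def using tendsto_rabs[OF tendsto_inverse_0_at_top[OF gam]] by simp
  have "err \<longlonglongrightarrow> 0"
    unfolding err_def by (rule tail_expansion_error_tendsto_0[OF Ls _ a_lim]) (simp_all add: a_def c_def)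
  then show "(\<lambda>n. \<bar>C0\<bar> * err n) \<longlonglongrightarrow> 0"
    by (rule tendsto_mult_right_zero)
  show "\<forall>\<^sub>F n in sequentially. norm (of_real (gam n) * (laplace (tail (M n)) (s / of_real (gam n))
            - (of_real (\<integral>x. x \<partial>M n) - s / of_real (gam n) * of_real ((1/2) * (\<integral>x. x ^ 2 \<partial>M n)))))
         \<le> \<bar>C0\<bar> * err n"
    using M dom eventually_gt_at_top[of 0, THEN filterlim_iff[THEN iffD1, OF gam, rule_format]]
  proof eventually_elim
    case (elim n)
    define sn where "sn = s / of_real (gam n)"
    have g: "0 < gam n" using elim by simp
    have sn: "0 \<le> Re sn" using s g by (simp add: sn_def Re_divide_of_real)
    define e where "e t = min ((norm sn * t)^2) (2 * (norm sn * t))" for t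
    have e_nonneg: "0 \<le> e t" if "0 \<le> t" for t using that by (simp add: e_def)
    have scale: "gam n * e t = min (c^2 * t^2 * a n) (2 * c * t)" if "0 \<le> t" for t
      using g that by (simp add: e_def sn_def c_def a_def norm_divide min_mult_distrib_left power2_eq_square field_simps)
    note expansion = laplace_tail_expansion[OF elim(1) sn]
    have "norm (laplace (tail (M n)) sn - (of_real (\<integral>x. x \<partial>M n) - sn * of_real ((1/2) * (\<integral>x. x ^ 2 \<partial>M n))))
        \<le> set_lebesgue_integral lborel {0..} (\<lambda>t. e t * tail (M n) t)"
      using expansion(2) by (simp add: e_def)
    also have "\<dots> \<le> set_lebesgue_integral lborel {0..} (\<lambda>t. \<bar>C0\<bar> * (e t * tail Ls t))"
    proof (rule set_integral_mono)
      show "set_integrable lborel {0..} (\<lambda>t. e t * tail (M n) t)"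
        using expansion(1) by (simp add: e_def)
      show "set_integrable lborel {0..} (\<lambda>t. \<bar>C0\<bar> * (e t * tail Ls t))"
        using laplace_tail_expansion(1)[OF Ls sn] by (intro set_integrable_mult_right) (simp add: e_def)
      fix t :: real assume t: "t \<in> {0..}"
      have "C0 * tail Ls t \<le> \<bar>C0\<bar> * tail Ls t" by (rule mult_right_mono[OF abs_ge_self tail_nonneg])
      then have "tail (M n) t \<le> \<bar>C0\<bar> * tail Ls t" using elim(2) t by force
      then have "e t * tail (M n) t \<le> e t * (\<bar>C0\<bar> * tail Ls t)"
        using e_nonneg[of t] t by (intro mult_left_mono) auto
      then show "e t * tail (M n) t \<le> \<bar>C0\<bar> * (e t * tail Ls t)" by (simp add: mult_ac)
    qed
    also have "\<dots> = set_lebesgue_integral lborel {0..}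
        (\<lambda>t. \<bar>C0\<bar> / gam n * (min (c^2 * t^2 * a n) (2 * c * t) * tail Ls t))"
      using g by (intro set_lebesgue_integral_cong) (simp_all add: scale[symmetric])
    also have "\<dots> = \<bar>C0\<bar> * err n / gam n"
      by (simp add: err_def)
    finally show ?case
      using g by (simp add: norm_mult sn_def pos_le_divide_eq mult.commute)
  qed
qed

lemma borel_measurable_truncation:
  fixes R :: "real \<Rightarrow> real"
  assumes loc: "\<And>T. set_integrable lborel {0..T} R"
  shows "(\<lambda>t. if 0 \<le> t then R t else 0) \<in> borel_measurable borel"
proof (rule borel_measurable_LIMSEQ_real[where u="\<lambda>i t. indicator {0..real i} t * R t"])
  fix i :: nat
  have "(\<lambda>t. indicator {0..real i} t *\<^sub>R R t) \<in> borel_measurable lborel"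
    using loc[of "real i"] unfolding set_integrable_def by (rule borel_measurable_integrable)
  then show "(\<lambda>t. indicator {0..real i} t * R t) \<in> borel_measurable borel" by simp
next
  fix t :: real
  obtain N :: nat where "t \<le> real N" using real_arch_simple by blast
  then show "(\<lambda>i. indicator {0..real i} t * R t) \<longlonglongrightarrow> (if 0 \<le> t then R t else 0)"
    by (intro tendsto_eventually) (auto simp: eventually_sequentially indicator_def intro!: exI[of _ N])
qed

lemma abs_set_integral_le_nn_integral:
  fixes h :: "real \<Rightarrow> real"
  shows "ennreal \<bar>set_lebesgue_integral lborel A h\<bar> \<le> (\<integral>\<^sup>+v. indicator A v * ennreal \<bar>h v\<bar> \<partial>lborel)"
proof (cases "set_integrable lborel A h")
  case True
  have "ennreal \<bar>set_lebesgue_integral lborel A h\<bar> = ennreal (norm (\<integral>v. indicator A v *\<^sub>R h v \<partial>lborel))"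
    by (simp add: set_lebesgue_integral_def)
  also have "\<dots> \<le> (\<integral>\<^sup>+v. ennreal (norm (indicator A v *\<^sub>R h v)) \<partial>lborel)"
    using True unfolding set_integrable_def by (rule integral_norm_bound_ennreal)
  also have "\<dots> = (\<integral>\<^sup>+v. indicator A v * ennreal \<bar>h v\<bar> \<partial>lborel)"
    by (intro nn_integral_cong) (simp add: indicator_def)
  finally show ?thesis .
next
  case False
  then show ?thesis by (simp add: set_lebesgue_integral_def set_integrable_def not_integrable_integral_eq)
qed

lemma nn_integral_renewal_truncated_le:
  fixes R f :: "real \<Rightarrow> real" and a K T :: real
  assumes [measurable]: "R \<in> borel_measurable borel" "f \<in> borel_measurable borel"
    and f0: "\<And>t. 0 \<le> f t"
    and eq: "\<And>t. 0 \<le> t \<Longrightarrow> ennreal \<bar>R t\<bar> \<le> ennreal (f t)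
              + (\<integral>\<^sup>+v. indicator {0..} v * indicator {v..} t * ennreal \<bar>R (t - v)\<bar> * ennreal (f v) \<partial>lborel)"
    and K: "(\<integral>\<^sup>+v. indicator {0..} v * ennreal (exp (- a * v) * f v) \<partial>lborel) \<le> ennreal K"
  defines "I \<equiv> (\<integral>\<^sup>+t. indicator {0..T} t * ennreal (exp (- a * t) * \<bar>R t\<bar>) \<partial>lborel)"
  shows "I \<le> ennreal K + ennreal K * I"
proof -
  define F where "F w = indicator {0..T} w * ennreal (exp (- a * w) * \<bar>R w\<bar>)" for w
  define G where "G v = ennreal (exp (- a * v) * f v)" for v
  have "I \<le> (\<integral>\<^sup>+t. indicator {0..} t * G t
      + (\<integral>\<^sup>+v. indicator {0..} v * indicator {v..} t * F (t - v) * G v \<partial>lborel) \<partial>lborel)"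
    unfolding I_def
  proof (intro nn_integral_mono)
    fix t
    show "indicator {0..T} t * ennreal (exp (- a * t) * \<bar>R t\<bar>) \<le> indicator {0..} t * G t
        + (\<integral>\<^sup>+v. indicator {0..} v * indicator {v..} t * F (t - v) * G v \<partial>lborel)"
    proof (cases "t \<in> {0..T}")
      case True
      have "ennreal (exp (- a * t) * \<bar>R t\<bar>) \<le> ennreal (exp (- a * t)) * (ennreal (f t)
            + (\<integral>\<^sup>+v. indicator {0..} v * indicator {v..} t * ennreal \<bar>R (t - v)\<bar> * ennreal (f v) \<partial>lborel))"
        using eq[of t] True by (auto simp: ennreal_mult intro: mult_left_mono)
      also have "\<dots> = ennreal (exp (- a * t) * f t) + (\<integral>\<^sup>+v. ennreal (exp (- a * t))
          * (indicator {0..} v * indicator {v..} t * ennreal \<bar>R (t - v)\<bar> * ennreal (f v)) \<partial>lborel)"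
      proof -
        have "(\<lambda>v. indicator {0..} v * indicator {v..} t * ennreal \<bar>R (t - v)\<bar> * ennreal (f v)) \<in> borel_measurable borel"
          unfolding indicator_def atLeast_iff by measurable
        then show ?thesis by (subst nn_integral_cmult) (auto simp: distrib_left ennreal_mult f0)
      qed
      also have "(\<integral>\<^sup>+v. ennreal (exp (- a * t))
          * (indicator {0..} v * indicator {v..} t * ennreal \<bar>R (t - v)\<bar> * ennreal (f v)) \<partial>lborel)
          = (\<integral>\<^sup>+v. indicator {0..} v * indicator {v..} t * F (t - v) * G v \<partial>lborel)"
      proof (intro nn_integral_cong)
        fix v
        have "ennreal (exp (- (a * t))) = ennreal (exp (- (a * v))) * ennreal (exp (- (a * (t - v))))"
          by (simp add: ennreal_mult[symmetric] exp_add[symmetric] algebra_simps)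
        then show "ennreal (exp (- a * t)) * (indicator {0..} v * indicator {v..} t * ennreal \<bar>R (t - v)\<bar> * ennreal (f v))
            = indicator {0..} v * indicator {v..} t * F (t - v) * G v"
          using True by (cases "0 \<le> v \<and> v \<le> t") (auto simp: F_def G_def ennreal_mult f0 indicator_def mult_ac)
      qed
      finally show ?thesis using True by (simp add: G_def)
    qed simp
  qed
  also have "\<dots> = (\<integral>\<^sup>+t. indicator {0..} t * G t \<partial>lborel)
      + (\<integral>\<^sup>+t. \<integral>\<^sup>+v. indicator {0..} v * indicator {v..} t * F (t - v) * G v \<partial>lborel \<partial>lborel)"
    unfolding F_def G_def by (rule nn_integral_add) measurable
  also have "(\<integral>\<^sup>+t. \<integral>\<^sup>+v. indicator {0..} v * indicator {v..} t * F (t - v) * G v \<partial>lborel \<partial>lborel)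
      = (\<integral>\<^sup>+w. indicator {0..} w * F w \<partial>lborel) * (\<integral>\<^sup>+v. indicator {0..} v * G v \<partial>lborel)"
    unfolding F_def G_def by (rule nn_integral_half_line_convolution) measurable
  also have "(\<integral>\<^sup>+w. indicator {0..} w * F w \<partial>lborel) = I"
    unfolding I_def F_def by (intro nn_integral_cong) (simp add: indicator_def)
  finally have "I \<le> (\<integral>\<^sup>+t. indicator {0..} t * G t \<partial>lborel) + I * (\<integral>\<^sup>+v. indicator {0..} v * G v \<partial>lborel)" .
  also have "\<dots> \<le> ennreal K + I * ennreal K"
    using K unfolding G_def by (intro add_mono mult_left_mono) auto
  finally show ?thesis by (simp add: mult.commute)
qed

lemma nn_integral_renewal_bound:
  fixes R f :: "real \<Rightarrow> real" and a K :: real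
  assumes [measurable]: "R \<in> borel_measurable borel" "f \<in> borel_measurable borel"
    and f0: "\<And>t. 0 \<le> f t" and a0: "0 \<le> a" and K0: "0 \<le> K" and K1: "K < 1"
    and loc: "\<And>T. set_integrable lborel {0..T} R"
    and eq: "\<And>t. 0 \<le> t \<Longrightarrow> ennreal \<bar>R t\<bar> \<le> ennreal (f t)
              + (\<integral>\<^sup>+v. indicator {0..} v * indicator {v..} t * ennreal \<bar>R (t - v)\<bar> * ennreal (f v) \<partial>lborel)"
    and K: "(\<integral>\<^sup>+v. indicator {0..} v * ennreal (exp (- a * v) * f v) \<partial>lborel) \<le> ennreal K"
  shows "(\<integral>\<^sup>+t. indicator {0..} t * ennreal (exp (- a * t) * \<bar>R t\<bar>) \<partial>lborel) \<le> ennreal (K / (1 - K))"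
proof -
  define I where "I T = (\<integral>\<^sup>+t. indicator {0..T} t * ennreal (exp (- a * t) * \<bar>R t\<bar>) \<partial>lborel)" for T :: real
  have I_bound: "I T \<le> ennreal (K / (1 - K))" for T
  proof -
    have "I T \<le> (\<integral>\<^sup>+t. ennreal (norm (indicator {0..T} t *\<^sub>R R t)) \<partial>lborel)"
      unfolding I_def using a0
      by (intro nn_integral_mono) (auto simp: indicator_def mult_left_le_one_le intro!: ennreal_leI)
    also have "\<dots> < \<infinity>" using loc[of T] unfolding set_integrable_def integrable_iff_bounded by simp
    finally obtain x where x: "I T = ennreal x" "0 \<le> x"
      using ennreal_cases[of "I T"] by auto
    have "ennreal x = I T" using x by simp
    also have "\<dots> \<le> ennreal K + ennreal K * I T"
      unfolding I_def by (rule nn_integral_renewal_truncated_le[OF assms(1,2) f0 eq K])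
    also have "\<dots> = ennreal (K + K * x)"
      using x K0 by (subst ennreal_plus) (auto simp: ennreal_mult)
    finally have "x \<le> K + K * x" using x K0 by (subst (asm) ennreal_le_iff) auto
    then have "x * (1 - K) \<le> K" by (simp add: algebra_simps)
    then show ?thesis using K1 x by (simp add: le_divide_eq ennreal_leI)
  qed
  have "(\<integral>\<^sup>+t. indicator {0..} t * ennreal (exp (- a * t) * \<bar>R t\<bar>) \<partial>lborel)
      = (\<integral>\<^sup>+t. (SUP i::nat. indicator {0..real i} t * ennreal (exp (- a * t) * \<bar>R t\<bar>)) \<partial>lborel)"
  proof (intro nn_integral_cong antisym)
    fix t :: real
    obtain i :: nat where "t \<le> real i" using real_arch_simple by blast
    then have "indicator {0..} t * ennreal (exp (- a * t) * \<bar>R t\<bar>)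
        = indicator {0..real i} t * ennreal (exp (- a * t) * \<bar>R t\<bar>)"
      by (simp add: indicator_def)
    then show "indicator {0..} t * ennreal (exp (- a * t) * \<bar>R t\<bar>)
        \<le> (SUP i::nat. indicator {0..real i} t * ennreal (exp (- a * t) * \<bar>R t\<bar>))"
      by (metis (no_types, lifting) SUP_upper UNIV_I)
    show "(SUP i::nat. indicator {0..real i} t * ennreal (exp (- a * t) * \<bar>R t\<bar>))
        \<le> indicator {0..} t * ennreal (exp (- a * t) * \<bar>R t\<bar>)"
      by (intro SUP_least) (simp add: indicator_def)
  qed
  also have "\<dots> = (SUP i::nat. I (real i))"
    unfolding I_def
    by (rule nn_integral_monotone_convergence_SUP)
       (auto simp: incseq_def le_fun_def indicator_def intro!: mult_right_mono)
  also have "\<dots> \<le> ennreal (K / (1 - K))" by (intro SUP_least I_bound)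
  finally show ?thesis .
qed

lemma renewal_equation_nn_bound:
  fixes R T :: "real \<Rightarrow> real" and c t :: real
  assumes [measurable]: "R \<in> borel_measurable borel" "T \<in> borel_measurable borel"
    and c: "0 \<le> c" and T0: "\<And>v. 0 \<le> T v"
    and eq: "R t = c * T t + c * set_lebesgue_integral lborel {0..t} (\<lambda>v. R (t - v) * T v)"
  shows "ennreal \<bar>R t\<bar> \<le> ennreal (c * T t)
      + (\<integral>\<^sup>+v. indicator {0..} v * indicator {v..} t * ennreal \<bar>R (t - v)\<bar> * ennreal (c * T v) \<partial>lborel)"
proof -
  define X where "X = set_lebesgue_integral lborel {0..t} (\<lambda>v. R (t - v) * T v)"
  have "\<bar>R t\<bar> \<le> c * T t + c * \<bar>X\<bar>"
    using eq c T0[of t] abs_triangle_ineq[of "c * T t" "c * X"] by (simp add: X_def abs_mult)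
  then have "ennreal \<bar>R t\<bar> \<le> ennreal (c * T t) + ennreal c * ennreal \<bar>X\<bar>"
    using c T0[of t] by (simp add: ennreal_plus[symmetric] ennreal_mult[symmetric] ennreal_leI del: ennreal_plus)
  also have "ennreal \<bar>X\<bar> \<le> (\<integral>\<^sup>+v. indicator {0..t} v * ennreal \<bar>R (t - v) * T v\<bar> \<partial>lborel)"
    unfolding X_def by (rule abs_set_integral_le_nn_integral)
  also have "ennreal c * (\<integral>\<^sup>+v. indicator {0..t} v * ennreal \<bar>R (t - v) * T v\<bar> \<partial>lborel)
      = (\<integral>\<^sup>+v. ennreal c * (indicator {0..t} v * ennreal \<bar>R (t - v) * T v\<bar>) \<partial>lborel)"
    by (rule nn_integral_cmult[symmetric]) measurable
  also have "\<dots> = (\<integral>\<^sup>+v. indicator {0..} v * indicator {v..} t * ennreal \<bar>R (t - v)\<bar> * ennreal (c * T v) \<partial>lborel)"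
  proof (intro nn_integral_cong)
    fix v :: real
    have "ennreal c * ennreal \<bar>R (t - v) * T v\<bar> = ennreal \<bar>R (t - v)\<bar> * ennreal (c * T v)"
      using c T0[of v] by (simp add: abs_mult ennreal_mult[symmetric] mult_ac)
    then show "ennreal c * (indicator {0..t} v * ennreal \<bar>R (t - v) * T v\<bar>)
        = indicator {0..} v * indicator {v..} t * ennreal \<bar>R (t - v)\<bar> * ennreal (c * T v)"
      by (cases "0 \<le> v \<and> v \<le> t") (auto simp: indicator_def mult_ac)
  qed
  finally show ?thesis by (simp add: add_left_mono mult_left_mono)
qed

lemma set_integrable_exp_renewal_solution:
  fixes M :: "real measure" and c a :: real and R :: "real \<Rightarrow> real"
  assumes M: "L2_lifetime_law M" and c: "0 \<le> c" and a: "0 \<le> a"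
    and [measurable]: "R \<in> borel_measurable borel" and loc: "\<And>T. set_integrable lborel {0..T} R"
    and eq: "\<And>t. 0 \<le> t \<Longrightarrow> R t = c * tail M t + c * set_lebesgue_integral lborel {0..t} (\<lambda>v. R (t - v) * tail M v)"
    and K1: "c * set_lebesgue_integral lborel {0..} (\<lambda>t. exp (- a * t) * tail M t) < 1"
  shows "set_integrable lborel {0..} (\<lambda>t. exp (- a * t) * \<bar>R t\<bar>)"
proof -
  have [measurable]: "tail M \<in> borel_measurable borel"
    by (rule borel_measurable_tail_L2_lifetime_law[OF M])
  define K where "K = c * set_lebesgue_integral lborel {0..} (\<lambda>t. exp (- a * t) * tail M t)"
  have "(\<integral>\<^sup>+v. indicator {0..} v * ennreal (exp (- a * v) * (c * tail M v)) \<partial>lborel)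
      = (\<integral>\<^sup>+v. ennreal (c * (indicator {0..} v * (exp (- a * v) * \<bar>tail M v\<bar>))) \<partial>lborel)"
    by (intro nn_integral_cong) (simp add: indicator_def tail_nonneg mult_ac)
  also have "\<dots> = ennreal K"
    using set_integrable_exp_tail[OF M a] c unfolding set_integrable_def K_def set_lebesgue_integral_def
    by (subst nn_integral_eq_integral) (auto simp: tail_nonneg mult_ac)
  finally have K: "(\<integral>\<^sup>+v. indicator {0..} v * ennreal (exp (- a * v) * (c * tail M v)) \<partial>lborel) = ennreal K" .
  have K0: "0 \<le> K"
    unfolding K_def set_lebesgue_integral_def using c
    by (intro mult_nonneg_nonneg integral_nonneg_AE) (auto simp: tail_nonneg)
  have "(\<integral>\<^sup>+t. indicator {0..} t * ennreal (exp (- a * t) * \<bar>R t\<bar>) \<partial>lborel) \<le> ennreal (K / (1 - K))"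
    using K1 c
    by (intro nn_integral_renewal_bound[OF _ _ _ a K0 _ loc _ K[THEN eq_refl]] renewal_equation_nn_bound eq)
       (simp_all add: K_def tail_nonneg)
  then have "(\<integral>\<^sup>+t. ennreal (norm (indicator {0..} t *\<^sub>R (exp (- a * t) * \<bar>R t\<bar>))) \<partial>lborel) < \<infinity>"
    by (simp add: indicator_mult_ennreal abs_mult le_less_trans)
  then show ?thesis
    unfolding set_integrable_def by (intro integrableI_bounded) simp_all
qed

lemma laplace_renewal_solution:
  fixes M :: "real measure" and c :: real and R :: "real \<Rightarrow> real" and s :: complex
  assumes M: "L2_lifetime_law M" and c: "0 \<le> c" and s: "0 \<le> Re s"
    and Rm[measurable]: "R \<in> borel_measurable borel" and loc: "\<And>T. set_integrable lborel {0..T} R"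
    and eq: "\<And>t. 0 \<le> t \<Longrightarrow> R t = c * tail M t + c * set_lebesgue_integral lborel {0..t} (\<lambda>v. R (t - v) * tail M v)"
    and K1: "c * set_lebesgue_integral lborel {0..} (\<lambda>t. exp (- Re s * t) * tail M t) < 1"
  shows "(1 + laplace R s) * (1 - of_real c * laplace (tail M) s) = 1"
proof -
  have Tm[measurable]: "tail M \<in> borel_measurable borel"
    by (rule borel_measurable_tail_L2_lifetime_law[OF M])
  note iT = set_integrable_exp_tail[OF M s]
  note conv = laplace_convolution[OF Rm Tm set_integrable_exp_renewal_solution[OF M c s Rm loc eq K1] iT]
  have T_int: "set_integrable lborel {0..} (\<lambda>t. exp (- s * of_real t) * of_real (tail M t))"
    by (rule set_integrable_laplace_integrand[OF Tm iT])
  have "laplace R s = set_lebesgue_integral lborel {0..}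
      (\<lambda>t. of_real c * (exp (- s * of_real t) * of_real (tail M t))
         + of_real c * (exp (- s * of_real t) * of_real (set_lebesgue_integral lborel {0..t} (\<lambda>v. R (t - v) * tail M v))))"
    unfolding laplace_def by (intro set_lebesgue_integral_cong) (auto simp: eq algebra_simps)
  also have "\<dots> = of_real c * laplace (tail M) s
      + of_real c * laplace (\<lambda>t. set_lebesgue_integral lborel {0..t} (\<lambda>v. R (t - v) * tail M v)) s"
    using T_int conv(1) by (simp add: laplace_def set_integrable_mult_right)
  also have "\<dots> = of_real c * laplace (tail M) s + of_real c * (laplace R s * laplace (tail M) s)"
    by (simp only: conv(2))
  finally show ?thesis by (simp add: algebra_simps)
qed

lemma set_integrable_exp_step:
  fixes a y :: real assumes a: "0 \<le> a"
  shows "set_integrable lborel {0..} (\<lambda>t. exp (- a * t) * \<bar>if y > t then 1 else 0\<bar>)"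
proof (rule set_integrable_bound[where f="\<lambda>t. indicator {0..\<bar>y\<bar>} t * (1::real)"])
  have "integrable lborel (\<lambda>t. indicator {0..\<bar>y\<bar>} t *\<^sub>R (1::real))"
    by (rule borel_integrable_compact) auto
  moreover have "(\<lambda>t. indicator {0..} t *\<^sub>R (indicator {0..\<bar>y\<bar>} t * 1))
      = (\<lambda>t. indicator {0..\<bar>y\<bar>} t *\<^sub>R (1::real))"
    by (auto simp: fun_eq_iff indicator_def)
  ultimately show "set_integrable lborel {0..} (\<lambda>t. indicator {0..\<bar>y\<bar>} t * (1::real))"
    by (simp add: set_integrable_def)
  show "AE t in lborel. t \<in> {0..} \<longrightarrow> norm (exp (- a * t) * \<bar>if y > t then 1 else 0\<bar>)
      \<le> norm (indicator {0..\<bar>y\<bar>} t * (1::real))"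
    using a by (intro AE_I2) (auto simp: indicator_def mult_le_one)
qed (simp add: set_borel_measurable_def)

lemma laplace_Rky:
  fixes M :: "real measure" and lam mu :: real and R :: "real \<Rightarrow> real" and s :: complex
    and k :: nat and y :: "nat \<Rightarrow> real"
  assumes M: "L2_lifetime_law M" and lm: "0 \<le> lam * mu" and s: "0 \<le> Re s"
    and loc: "\<And>T. set_integrable lborel {0..T} R"
    and eq: "\<And>t. 0 \<le> t \<Longrightarrow> R t = lam * mu * tail M t
               + lam * mu * set_lebesgue_integral lborel {0..t} (\<lambda>v. R (t - v) * tail M v)"
    and K1: "lam * mu * set_lebesgue_integral lborel {0..} (\<lambda>t. exp (- Re s * t) * tail M t) < 1"
  shows "(1 - of_real (lam * mu) * laplace (tail M) s) * laplace (Rky lam R k y) s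
       = of_real lam * (\<Sum>j=1..k. laplace (\<lambda>t. if y j > t then 1 else 0) s)"
proof -
  \<comment> \<open>\<open>R\<close> is only constrained on \<open>[0,\<infinity>)\<close>; its truncation is measurable and gives the same \<open>Rky\<close>.\<close>
  define Rp where "Rp t = (if 0 \<le> t then R t else 0)" for t
  define g where "g j = (\<lambda>t. if y j > t then 1 else (0::real))" for j
  define C where "C j = (\<lambda>t. set_lebesgue_integral lborel {0..t} (\<lambda>v. Rp (t - v) * g j v))" for j
  have Rpm[measurable]: "Rp \<in> borel_measurable borel"
    unfolding Rp_def[abs_def] by (rule borel_measurable_truncation[OF loc])
  have gm[measurable]: "g j \<in> borel_measurable borel" for j
    unfolding g_def by measurable
  have truncate: "set_lebesgue_integral lborel {0..t} (\<lambda>v. R (t - v) * h v)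
      = set_lebesgue_integral lborel {0..t} (\<lambda>v. Rp (t - v) * h v)" for t and h :: "real \<Rightarrow> real"
    by (rule set_lebesgue_integral_cong) (auto simp: Rp_def)
  have locp: "set_integrable lborel {0..T} Rp" for T
    using loc[of T] by (rule set_integrable_cong[THEN iffD1, rotated -1]) (auto simp: Rp_def)
  have eqp: "Rp t = lam * mu * tail M t + lam * mu * set_lebesgue_integral lborel {0..t} (\<lambda>v. Rp (t - v) * tail M v)"
    if "0 \<le> t" for t
    using eq[OF that] that by (simp add: Rp_def truncate)
  note solution = laplace_renewal_solution[OF M lm s Rpm locp eqp K1]
    and R_int = set_integrable_exp_renewal_solution[OF M lm s Rpm locp eqp K1]
  have ig: "set_integrable lborel {0..} (\<lambda>t. exp (- Re s * t) * \<bar>g j t\<bar>)" for j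
    unfolding g_def by (rule set_integrable_exp_step[OF s])
  have g_int: "set_integrable lborel {0..} (\<lambda>t. exp (- s * of_real t) * of_real (g j t))" for j
    by (rule set_integrable_laplace_integrand[OF gm ig])
  note conv = laplace_convolution[OF Rpm gm R_int ig]
  have "laplace (Rky lam R k y) s = laplace (\<lambda>t. \<Sum>j=1..k. lam * g j t + lam * C j t) s"
    by (rule laplace_cong) (simp add: Rky_def g_def C_def truncate)
  also have "\<dots> = (\<Sum>j=1..k. of_real lam * laplace (g j) s + of_real lam * laplace (C j) s)"
  proof -
    have g_int': "set_integrable lborel {0..} (\<lambda>t. exp (- s * of_real t) * of_real (lam * g j t))"
      and C_int': "set_integrable lborel {0..} (\<lambda>t. exp (- s * of_real t) * of_real (lam * C j t))" for j
      unfolding C_def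
      by (rule set_integrable_laplace_integrand_cmult[OF g_int], rule set_integrable_laplace_integrand_cmult[OF conv(1)])
    have "set_integrable lborel {0..} (\<lambda>t. exp (- s * of_real t) * of_real (lam * g j t + lam * C j t))" for j
      using set_integral_add(1)[OF g_int' C_int'] by (simp add: distrib_left)
    then show ?thesis
      by (simp add: laplace_sum laplace_add[OF g_int' C_int'] laplace_cmult)
  qed
  also have "\<dots> = (1 + laplace Rp s) * (of_real lam * (\<Sum>j=1..k. laplace (g j) s))"
  proof -
    have "laplace (C j) s = laplace Rp s * laplace (g j) s" for j
      unfolding C_def by (rule conv(2))
    then show ?thesis by (simp add: sum_distrib_left algebra_simps)
  qed
  finally have L: "laplace (Rky lam R k y) s = (1 + laplace Rp s) * (of_real lam * (\<Sum>j=1..k. laplace (g j) s))" .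
  have "(1 - of_real (lam * mu) * laplace (tail M) s) * laplace (Rky lam R k y) s
      = ((1 + laplace Rp s) * (1 - of_real (lam * mu) * laplace (tail M) s)) * (of_real lam * (\<Sum>j=1..k. laplace (g j) s))"
    unfolding L by (simp only: ac_simps)
  also have "\<dots> = of_real lam * (\<Sum>j=1..k. laplace (\<lambda>t. if y j > t then 1 else 0) s)"
    using solution by (simp add: g_def)
  finally show ?thesis .
qed

lemma one_minus_power_taylor_bounds:
  fixes w :: real assumes w: "0 \<le> w" "w \<le> 1"
  shows "0 \<le> (1 - w) ^ k - 1 + real k * w"
    and "(1 - w) ^ k - 1 + real k * w \<le> real k * w"
    and "(1 - w) ^ k - 1 + real k * w \<le> (real k)^2 * w^2"
proof -
  show nonneg: "0 \<le> (1 - w) ^ k - 1 + real k * w" for k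
    using Bernoulli_inequality[of "- w" k] w by simp
  show "(1 - w) ^ k - 1 + real k * w \<le> real k * w"
    using power_le_one[of "1 - w" k] w by simp
  show "(1 - w) ^ k - 1 + real k * w \<le> (real k)^2 * w^2"
  proof (induction k)
    case (Suc k)
    have "(1 - w) ^ Suc k - 1 + real (Suc k) * w = (1 - w) * ((1 - w) ^ k - 1 + real k * w) + real k * w^2"
      by (simp add: algebra_simps power2_eq_square)
    also have "\<dots> \<le> (real k)^2 * w^2 + real k * w^2"
      using Suc nonneg[of k] w by (smt (verit) mult_left_le_one_le)
    also have "\<dots> \<le> (real (Suc k))^2 * w^2"
      using w by (simp add: power2_eq_square algebra_simps)
    finally show ?case .
  qed simp
qed

lemma phi_n_secant_bound:
  fixes p :: "nat \<Rightarrow> real" and g z :: real and n kk :: nat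
  assumes pl: "prob_law_Zplus p" and sm: "summable (\<lambda>k. real k * p k)"
    and g: "0 < g" and z: "0 < z" "z \<le> real n"
  shows "\<bar>phi_n n g p z / z - g * (1 - mean_Z p)\<bar>
           \<le> (g / real n) * (real kk)^2 * z + g * (\<Sum>k. if kk \<le> k then real k * p k else 0)"
proof -
  have p0: "\<And>k. 0 \<le> p k" and ps: "p sums 1" using pl unfolding prob_law_Zplus_def by auto
  define w where "w = z / real n"
  have npos: "0 < real n" using z by linarith
  have w: "0 \<le> w" "w \<le> 1" using z npos by (auto simp: w_def field_simps)
  define H where "H k = p k * ((1 - w) ^ k - 1 + real k * w)" for k
  have "summable (\<lambda>k. p k * (1 - w) ^ k)"
    by (rule summable_comparison_test[OF _ sums_summable[OF ps]])
       (use p0 w in \<open>auto intro!: exI[of _ 0] mult_left_le power_le_one simp: abs_mult\<close>)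
  then have "(\<lambda>k. p k * (1 - w) ^ k - p k + w * (real k * p k)) sums (genfun p (1 - w) - 1 + w * mean_Z p)"
    unfolding genfun_def mean_Z_def using sm ps by (intro sums_add sums_diff sums_mult summable_sums)
  moreover have "(\<lambda>k. p k * (1 - w) ^ k - p k + w * (real k * p k)) = H"
    by (auto simp: H_def fun_eq_iff algebra_simps)
  ultimately have Hs: "H sums (genfun p (1 - w) - 1 + w * mean_Z p)" by simp
  have secant: "phi_n n g p z / z - g * (1 - mean_Z p) = g / w * (genfun p (1 - w) - 1 + w * mean_Z p)"
    using npos z by (simp add: phi_n_def w_def field_simps)
  define S where "S = (\<Sum>k. if kk \<le> k then real k * p k else 0)"
  have "summable (\<lambda>k. if kk \<le> k then real k * p k else 0)"
    by (rule summable_comparison_test[OF _ sm]) (auto simp: p0)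
  then have Bs: "(\<lambda>k. w * (if kk \<le> k then real k * p k else 0) + (real kk)^2 * w^2 * p k) sums (w * S + (real kk)^2 * w^2 * 1)"
    unfolding S_def by (intro sums_add sums_mult ps summable_sums)
  have HB: "H k \<le> w * (if kk \<le> k then real k * p k else 0) + (real kk)^2 * w^2 * p k" for k
  proof (cases "kk \<le> k")
    case True
    have "H k \<le> p k * (real k * w)"
      unfolding H_def using one_minus_power_taylor_bounds(2)[OF w] by (rule mult_left_mono) (simp add: p0)
    then show ?thesis using True p0[of k] by (simp add: algebra_simps add_increasing2)
  next
    case False
    have "H k \<le> p k * ((real k)^2 * w^2)"
      unfolding H_def using one_minus_power_taylor_bounds(3)[OF w] by (rule mult_left_mono) (simp add: p0)
    also have "\<dots> \<le> p k * ((real kk)^2 * w^2)"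
      using False p0 by (intro mult_left_mono mult_right_mono power_mono) auto
    finally show ?thesis using False by (simp add: algebra_simps)
  qed
  have "0 \<le> genfun p (1 - w) - 1 + w * mean_Z p"
    using sums_le[OF _ sums_zero Hs] one_minus_power_taylor_bounds(1)[OF w] p0 by (simp add: H_def)
  moreover have "genfun p (1 - w) - 1 + w * mean_Z p \<le> w * S + (real kk)^2 * w^2"
    using sums_le[OF HB Hs Bs] by simp
  moreover have "0 < w" using z npos by (simp add: w_def)
  ultimately have "\<bar>g / w * (genfun p (1 - w) - 1 + w * mean_Z p)\<bar> \<le> g / w * (w * S + (real kk)^2 * w^2)"
    using g by (simp add: abs_mult divide_right_mono mult_left_mono)
  also have "\<dots> = (g / real n) * (real kk)^2 * z + g * S"
    using npos z by (simp add: w_def power2_eq_square field_simps)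
  finally show ?thesis unfolding secant S_def .
qed

lemma convergent_gam_one_minus_mean:
  fixes p :: "nat \<Rightarrow> nat \<Rightarrow> real" and gam :: "nat \<Rightarrow> real" and gstar :: real and phi :: "real \<Rightarrow> real"
  assumes p_law: "\<forall>\<^sub>F n in sequentially. prob_law_Zplus (p n) \<and> summable (\<lambda>k. real k * p n k)"
    and gam_pos: "\<forall>\<^sub>F n in sequentially. 0 < gam n"
    and gam_lin: "(\<lambda>n. gam n / real n) \<longlonglongrightarrow> gstar"
    and phi_lim: "\<And>z. 0 < z \<Longrightarrow> (\<lambda>n. phi_n n (gam n) (p n) z) \<longlonglongrightarrow> phi z"
    and tailc: "(\<lambda>k1. limsup (\<lambda>n. ereal (gam n * (\<Sum>k. if k1 \<le> k then real k * p n k else 0)))) \<longlonglongrightarrow> 0"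
  shows "convergent (\<lambda>n. gam n * (1 - mean_Z (p n)))"
proof (rule Cauchy_convergent, rule CauchyI)
  define Q where "Q n = gam n * (1 - mean_Z (p n))" for n
  define S where "S k1 n = (\<Sum>k. if k1 \<le> k then real k * p n k else 0)" for k1 n
  fix e :: real assume e: "0 < e"
  define \<epsilon> where "\<epsilon> = e / 7"
  have \<epsilon>: "0 < \<epsilon>" using e by (simp add: \<epsilon>_def)
  obtain k1 where "limsup (\<lambda>n. ereal (gam n * S k1 n)) < ereal \<epsilon>"
    using order_tendstoD(2)[OF tailc, of "ereal \<epsilon>"] \<epsilon> by (auto simp: S_def eventually_sequentially)
  then have ev_tail: "\<forall>\<^sub>F n in sequentially. gam n * S k1 n < \<epsilon>"
    using Limsup_lessD by fastforce
  define C where "C = (\<bar>gstar\<bar> + 1) * (real k1)^2"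
  define z where "z = \<epsilon> / (C + 1)"
  have C: "0 \<le> C" by (simp add: C_def)
  have z: "0 < z" using \<epsilon> C by (simp add: z_def)
  have Cz: "C * z \<le> \<epsilon>"
    using \<epsilon> C by (simp add: z_def field_simps)
  have ev_lin: "\<forall>\<^sub>F n in sequentially. gam n / real n < \<bar>gstar\<bar> + 1"
    using order_tendstoD(2)[OF gam_lin, of "\<bar>gstar\<bar> + 1"] by simp
  have ev_phi: "\<forall>\<^sub>F n in sequentially. \<bar>phi_n n (gam n) (p n) z - phi z\<bar> < \<epsilon> * z"
    using phi_lim[OF z] \<epsilon> z unfolding tendsto_iff dist_real_def by (auto simp: mult_pos_pos)
  obtain N :: nat where "z \<le> real N" using real_arch_simple by blast
  then have ev_n: "\<forall>\<^sub>F n in sequentially. z \<le> real n"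
    unfolding eventually_sequentially by (metis of_nat_le_iff order_trans)
  have "\<forall>\<^sub>F n in sequentially. \<bar>Q n - phi z / z\<bar> < 3 * \<epsilon>"
    using p_law gam_pos ev_tail ev_lin ev_phi ev_n
  proof eventually_elim
    case (elim n)
    then have gn: "0 < gam n" by simp
    have "\<bar>phi_n n (gam n) (p n) z / z - Q n\<bar> \<le> (gam n / real n) * (real k1)^2 * z + gam n * S k1 n"
      unfolding Q_def S_def using phi_n_secant_bound[OF _ _ gn z] elim by blast
    also have "(gam n / real n) * (real k1)^2 * z \<le> C * z"
      unfolding C_def using elim z by (intro mult_right_mono) auto
    finally have "\<bar>phi_n n (gam n) (p n) z / z - Q n\<bar> < 2 * \<epsilon>"
      using Cz elim by linarith
    moreover have "\<bar>phi_n n (gam n) (p n) z / z - phi z / z\<bar> < \<epsilon>"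
      using elim z by (simp add: diff_divide_distrib[symmetric] abs_divide divide_less_eq)
    ultimately show ?case by linarith
  qed
  then obtain M where M: "\<And>n. M \<le> n \<Longrightarrow> \<bar>Q n - phi z / z\<bar> < 3 * \<epsilon>"
    by (auto simp: eventually_sequentially)
  show "\<exists>M. \<forall>m\<ge>M. \<forall>n\<ge>M. norm (gam m * (1 - mean_Z (p m)) - gam n * (1 - mean_Z (p n))) < e"
  proof (intro exI allI impI)
    fix m n assume "M \<le> m" "M \<le> n"
    with M[of m] M[of n] show "norm (gam m * (1 - mean_Z (p m)) - gam n * (1 - mean_Z (p n))) < e"
      unfolding Q_def \<epsilon>_def real_norm_def by linarith
  qed
qed

lemma laplace_defect_tendsto:
  fixes M :: "nat \<Rightarrow> real measure" and Ls :: "real measure" and a gam :: "nat \<Rightarrow> real" and s :: complex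
  assumes M: "\<forall>\<^sub>F n in sequentially. L2_lifetime_law (M n)" and Ls: "L2_lifetime_law Ls"
    and dom: "\<forall>\<^sub>F n in sequentially. \<forall>t\<ge>0. tail (M n) t \<le> C0 * tail Ls t"
    and gam: "filterlim gam at_top sequentially" and a: "a \<longlonglongrightarrow> lam"
    and sig: "(\<lambda>n. (1/2) * (\<integral>x. x ^ 2 \<partial>M n)) \<longlonglongrightarrow> sig"
    and c: "(\<lambda>n. gam n * (1 - a n * (\<integral>x. x \<partial>M n))) \<longlonglongrightarrow> c"
    and s: "0 \<le> Re s"
  shows "(\<lambda>n. of_real (gam n) * (1 - of_real (a n) * laplace (tail (M n)) (s / of_real (gam n))))
         \<longlonglongrightarrow> of_real c + of_real (lam * sig) * s"
proof -
  define E where "E n = of_real (gam n) * (laplace (tail (M n)) (s / of_real (gam n))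
      - (of_real (\<integral>x. x \<partial>M n) - s / of_real (gam n) * of_real ((1/2) * (\<integral>x. x ^ 2 \<partial>M n))))" for n
  have E: "E \<longlonglongrightarrow> 0"
    unfolding E_def by (rule laplace_tail_rescaled_expansion[OF M Ls dom gam s])
  have "(\<lambda>n. of_real (gam n * (1 - a n * (\<integral>x. x \<partial>M n))) + of_real (a n * ((1/2) * (\<integral>x. x ^ 2 \<partial>M n))) * s
      - of_real (a n) * E n) \<longlonglongrightarrow> of_real c + of_real (lam * sig) * s - of_real lam * 0"
    by (intro tendsto_intros c a sig E)
  moreover have "\<forall>\<^sub>F n in sequentially. of_real (gam n * (1 - a n * (\<integral>x. x \<partial>M n)))
      + of_real (a n * ((1/2) * (\<integral>x. x ^ 2 \<partial>M n))) * s - of_real (a n) * E n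
      = of_real (gam n) * (1 - of_real (a n) * laplace (tail (M n)) (s / of_real (gam n)))"
    using eventually_gt_at_top[of 0, THEN filterlim_iff[THEN iffD1, OF gam, rule_format]]
    by eventually_elim (simp add: E_def field_simps)
  ultimately show ?thesis by (simp add: Lim_transform_eventually)
qed

theorem laplace_Rky_rescaled_tendsto:
  fixes M :: "nat \<Rightarrow> real measure" and Ls :: "real measure" and lamn mu gam :: "nat \<Rightarrow> real"
    and R :: "nat \<Rightarrow> real \<Rightarrow> real" and s :: complex and k :: nat and y :: "nat \<Rightarrow> real"
  assumes M: "\<forall>\<^sub>F n in sequentially. L2_lifetime_law (M n)" and Ls: "L2_lifetime_law Ls"
    and dom: "\<forall>\<^sub>F n in sequentially. \<forall>t\<ge>0. tail (M n) t \<le> C0 * tail Ls t"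
    and gam: "filterlim gam at_top sequentially"
    and lamn: "lamn \<longlonglongrightarrow> lam" and mu: "mu \<longlonglongrightarrow> 1"
    and sig: "(\<lambda>n. (1/2) * (\<integral>x. x ^ 2 \<partial>M n)) \<longlonglongrightarrow> sig"
    and c: "(\<lambda>n. gam n * (1 - lamn n * mu n * (\<integral>x. x \<partial>M n))) \<longlonglongrightarrow> c"
    and R: "\<forall>\<^sub>F n in sequentially. 0 \<le> lamn n * mu n \<and> (\<forall>T. set_integrable lborel {0..T} (R n))
              \<and> (\<forall>t\<ge>0. R n t = lamn n * mu n * tail (M n) t
                   + lamn n * mu n * set_lebesgue_integral lborel {0..t} (\<lambda>v. R n (t - v) * tail (M n) v))"
    and s: "0 \<le> Re s" and stable: "0 < c + lam * sig * Re s"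
    and y: "\<forall>j\<in>{1..k}. 0 \<le> y j"
  shows "(\<lambda>n. laplace (Rky (lamn n) (R n) k y) (s / of_real (gam n)) / of_real (gam n))
         \<longlonglongrightarrow> of_real lam * (\<Sum>j=1..k. of_real (y j)) / (of_real c + of_real (lam * sig) * s)"
proof -
  define D where "D z n = of_real (gam n) * (1 - of_real (lamn n * mu n) * laplace (tail (M n)) (z / of_real (gam n)))"
    for z n
  have lm: "(\<lambda>n. lamn n * mu n) \<longlonglongrightarrow> lam" using tendsto_mult[OF lamn mu] by simp
  have D: "(\<lambda>n. D z n) \<longlonglongrightarrow> of_real c + of_real (lam * sig) * z" if "0 \<le> Re z" for z
    unfolding D_def by (rule laplace_defect_tendsto[OF M Ls dom gam lm sig c that])
  have D0: "of_real c + of_real (lam * sig) * s \<noteq> 0"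
    using stable by (auto simp: complex_eq_iff)
  have gam_pos: "\<forall>\<^sub>F n in sequentially. 0 < gam n"
    using gam by (simp add: filterlim_at_top_dense)
  have "(\<lambda>n. Re (D (of_real (Re s)) n)) \<longlonglongrightarrow> c + lam * sig * Re s"
    using tendsto_Re[OF D[of "of_real (Re s)"]] s by simp
  \<comment> \<open>For real arguments \<open>D\<close> is real, and its positivity is exactly subcriticality at \<open>Re s / \<gamma>\<^sub>n\<close>.\<close>
  then have "\<forall>\<^sub>F n in sequentially. 0 < Re (D (of_real (Re s)) n)"
    using stable by (rule order_tendstoD(1))
  then have subcritical: "\<forall>\<^sub>F n in sequentially.
      lamn n * mu n * set_lebesgue_integral lborel {0..} (\<lambda>t. exp (- Re (s / of_real (gam n)) * t) * tail (M n) t) < 1"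
    using gam_pos
  proof eventually_elim
    case (elim n)
    have "0 < gam n * (1 - lamn n * mu n
        * set_lebesgue_integral lborel {0..} (\<lambda>t. exp (- (Re s / gam n) * t) * tail (M n) t))"
      using elim laplace_of_real[of "tail (M n)" "Re s / gam n"] by (simp add: D_def)
    then show ?case using elim by (simp add: Re_divide_of_real zero_less_mult_iff)
  qed
  have step: "(\<lambda>n. laplace (\<lambda>t. if y j > t then 1 else 0) (s / of_real (gam n))) \<longlonglongrightarrow> of_real (y j)"
    if "j \<in> {1..k}" for j
  proof (rule laplace_step_tendsto)
    have "(\<lambda>n. s * of_real (inverse (gam n))) \<longlonglongrightarrow> s * of_real 0"
      by (intro tendsto_intros tendsto_inverse_0_at_top gam)
    then show "(\<lambda>n. s / of_real (gam n)) \<longlonglongrightarrow> 0" by (simp add: divide_inverse)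
  qed (use y that in auto)
  have "(\<lambda>n. of_real (lamn n) * (\<Sum>j=1..k. laplace (\<lambda>t. if y j > t then 1 else 0) (s / of_real (gam n))) / D s n)
      \<longlonglongrightarrow> of_real lam * (\<Sum>j=1..k. of_real (y j)) / (of_real c + of_real (lam * sig) * s)"
    by (intro tendsto_intros lamn D s D0 step) auto
  moreover have "\<forall>\<^sub>F n in sequentially.
      of_real (lamn n) * (\<Sum>j=1..k. laplace (\<lambda>t. if y j > t then 1 else 0) (s / of_real (gam n))) / D s n
      = laplace (Rky (lamn n) (R n) k y) (s / of_real (gam n)) / of_real (gam n)"
    using M R gam_pos subcritical tendsto_imp_eventually_ne[OF D[OF s] D0]
  proof eventually_elim
    case (elim n)
    have sn: "0 \<le> Re (s / of_real (gam n))" using s elim by (simp add: Re_divide_of_real)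
    have "D s n * laplace (Rky (lamn n) (R n) k y) (s / of_real (gam n))
        = of_real (gam n) * (of_real (lamn n) * (\<Sum>j=1..k. laplace (\<lambda>t. if y j > t then 1 else 0) (s / of_real (gam n))))"
      unfolding D_def using laplace_Rky[OF elim(1) _ sn, of "lamn n" "mu n" "R n" k y] elim by (simp add: mult.assoc)
    then show ?case using elim by (simp add: field_simps)
  qed
  ultimately show ?thesis by (rule Lim_transform_eventually)
qed

lemma tendsto_1_of_scaled_defect:
  fixes gam x :: "nat \<Rightarrow> real"
  assumes gam: "filterlim gam at_top sequentially" and defect: "(\<lambda>n. gam n * (1 - x n)) \<longlonglongrightarrow> L"
  shows "x \<longlonglongrightarrow> 1"
proof -
  have "(\<lambda>n. 1 - gam n * (1 - x n) * inverse (gam n)) \<longlonglongrightarrow> 1 - L * 0"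
    by (intro tendsto_intros defect tendsto_inverse_0_at_top gam)
  moreover have "\<forall>\<^sub>F n in sequentially. 0 < gam n"
    using gam by (simp add: filterlim_at_top_dense)
  then have "\<forall>\<^sub>F n in sequentially. 1 - gam n * (1 - x n) * inverse (gam n) = x n"
    by eventually_elim (simp add: field_simps)
  ultimately show ?thesis by (simp add: Lim_transform_eventually)
qed

lemma scaled_defect_mult_tendsto:
  fixes gam x z :: "nat \<Rightarrow> real"
  assumes gam: "filterlim gam at_top sequentially"
    and x: "(\<lambda>n. gam n * (1 - x n)) \<longlonglongrightarrow> a" and z: "(\<lambda>n. gam n * (1 - z n)) \<longlonglongrightarrow> b"
  shows "(\<lambda>n. gam n * (1 - x n * z n)) \<longlonglongrightarrow> a + b"
  using tendsto_add[OF x tendsto_mult[OF tendsto_1_of_scaled_defect[OF gam x] z]]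
  by (simp add: algebra_simps)

lemma set_integral_oscillating_exp_decay:
  fixes a c u :: real assumes c: "0 < c"
  shows "set_lebesgue_integral lborel {0..}
           (\<lambda>t. exp (\<i> * complex_of_real (u * t)) * complex_of_real (a * exp (- c * t)))
       = of_real a / (of_real c - \<i> * of_real u)"
proof -
  have "exp (\<i> * complex_of_real (u * t)) * complex_of_real (a * exp (- c * t))
      = exp (- (of_real c - \<i> * of_real u) * of_real t) * complex_of_real (a * 1)" for t
    by (simp add: exp_of_real[symmetric] exp_add[symmetric] algebra_simps)
  then show ?thesis
    using laplace_const_1(2)[of "of_real c - \<i> * of_real u"] c
    by (simp only: laplace_def[symmetric] laplace_cmult) simp
qed

theorem lemma5p7:
  fixes lamn :: "nat \<Rightarrow> real" and Lam :: "nat \<Rightarrow> real measure"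
    and p q :: "nat \<Rightarrow> nat \<Rightarrow> real" and gam :: "nat \<Rightarrow> real"
    and gstar lam eta sig b beta u :: real
    and psi phi :: "real \<Rightarrow> real"
    and R :: "nat \<Rightarrow> real \<Rightarrow> real"
    and k :: nat and y :: "nat \<Rightarrow> real"
  defines "etan \<equiv> (\<lambda>n. integral\<^sup>L (Lam n) (\<lambda>x. x))"
    and "sigman \<equiv> (\<lambda>n. (1/2) * integral\<^sup>L (Lam n) (\<lambda>x. x ^ 2))"
    and "mn \<equiv> (\<lambda>n. mean_Z (p n))"
    and "m \<equiv> lim (\<lambda>n. gam n * (1 - mean_Z (p n)))"
  assumes lam_pos: "\<forall>n\<ge>1. lamn n > 0"
    and Lam_prob: "\<forall>n\<ge>1. prob_space (Lam n) \<and> sets (Lam n) = sets borel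
                     \<and> measure (Lam n) {..<0} = 0"
    and Lam_mom: "\<forall>n\<ge>1. integrable (Lam n) (\<lambda>x. x) \<and> integrable (Lam n) (\<lambda>x. x ^ 2)"
    and p_law: "\<forall>n\<ge>1. prob_law_Zplus (p n) \<and> summable (\<lambda>k. real k * p n k)"
    and q_law: "\<forall>n\<ge>1. prob_law_Zplus (q n)"
    and gam_pos: "\<forall>n\<ge>1. gam n > 0"
    and gam_inf: "filterlim gam at_top sequentially"
    and gam_lin: "(\<lambda>n. gam n / real n) \<longlonglongrightarrow> gstar" and gstar: "gstar \<ge> 0"
    \<comment> \<open>Condition 1 (i)\<close>
    and C1_lam: "lamn \<longlonglongrightarrow> lam" "lam > 0"
    and C1_eta: "etan \<longlonglongrightarrow> eta" "eta > 0"
    and C1_sig: "sigman \<longlonglongrightarrow> sig" "sig > 0"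
    and C1_b: "(\<lambda>n. gam n * (1 - lamn n * etan n)) \<longlonglongrightarrow> b"
    \<comment> \<open>Condition 1 (ii)\<close>
    and C1_psi: "\<forall>T. uniform_limit {0..T} (\<lambda>n. psi_n n (gam n) (q n)) psi sequentially"
    \<comment> \<open>Condition 1 (iii)\<close>
    and C1_phi_lip: "\<forall>T. \<exists>L. \<forall>n\<ge>1. L-lipschitz_on {0..min T (real n)} (phi_n n (gam n) (p n))"
    and C1_phi_lim: "\<forall>T. uniform_limit {0..T} (\<lambda>n. phi_n n (gam n) (p n)) phi sequentially"
    and C1_phi_cont: "continuous_on {0..} phi"
    \<comment> \<open>Condition 2, for some \<open>\<alpha> \<in> (1,2)\<close>\<close>
    and C2: "\<exists>\<alpha>. 1 < \<alpha> \<and> \<alpha> < 2 \<and>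
       (\<exists>C k0. C > 0 \<and> k0 > (0::nat) \<and>
          (\<forall>n\<ge>1. summable (\<lambda>k. if k \<ge> k0 then (real k / real n) powr \<alpha> * p n k else 0)
                 \<and> summable (\<lambda>k. real k powr \<alpha> * q n k)
                 \<and> real n * gam n * (\<Sum>k. if k \<ge> k0 then (real k / real n) powr \<alpha> * p n k else 0)
                     + (\<Sum>k. real k powr \<alpha> * q n k) \<le> C)) \<and>
       ((\<lambda>k1. limsup (\<lambda>n. ereal (gam n * (\<Sum>k. if k \<ge> k1 then real k * p n k else 0))))
          \<longlonglongrightarrow> 0) \<and>
       (\<exists>C0 Ls. C0 > 0 \<and> prob_space Ls \<and> sets Ls = sets borel \<and> measure Ls {..<0} = 0
          \<and> integrable Ls (\<lambda>t. \<bar>t\<bar> powr (2 * \<alpha>))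
          \<and> (\<forall>n\<ge>1. \<forall>t\<ge>0. tail (Lam n) t \<le> C0 * tail Ls t))"
    and beta: "beta \<ge> 0" "beta > - (b + m) / (sig * lam)"
    \<comment> \<open>\<open>R\<^sup>(\<^sup>n\<^sup>)\<close>: the locally integrable solution of the renewal equation\<close>
    and R_loc: "\<forall>n\<ge>1. \<forall>T. set_integrable lborel {0..T} (R n)"
    and R_eq: "\<forall>n\<ge>1. \<forall>t\<ge>0. R n t = lamn n * mn n * tail (Lam n) t
                 + lamn n * mn n * set_lebesgue_integral lborel {0..t} (\<lambda>s. R n (t - s) * tail (Lam n) s)"
    and k_pos: "k \<ge> 1" and y_nonneg: "\<forall>j\<in>{1..k}. y j \<ge> 0"
  shows "(\<lambda>n. set_lebesgue_integral lborel {0..}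
            (\<lambda>t. exp (\<i> * complex_of_real (u * t))
                 * complex_of_real (Rky_beta beta (gam n) (lamn n) (R n) k y (gam n * t))))
         \<longlonglongrightarrow> complex_of_real (\<Sum>j=1..k. y j)
             * set_lebesgue_integral lborel {0..}
                 (\<lambda>t. exp (\<i> * complex_of_real (u * t))
                      * complex_of_real ((1 / sig) * exp (- ((b + m) / (sig * lam) + beta) * t)))"
proof -
  obtain \<alpha> C0 Ls where \<alpha>: "1 < \<alpha>"
    and tailc: "(\<lambda>k1. limsup (\<lambda>n. ereal (gam n * (\<Sum>k. if k \<ge> k1 then real k * p n k else 0)))) \<longlonglongrightarrow> 0"
    and Ls: "prob_space Ls" "sets Ls = sets borel" "measure Ls {..<0} = 0"
    and Ls_moment: "integrable Ls (\<lambda>t. \<bar>t\<bar> powr (2 * \<alpha>))"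
    and dom: "\<forall>n\<ge>1. \<forall>t\<ge>0. tail (Lam n) t \<le> C0 * tail Ls t"
    using C2 by blast
  have Ls_law: "L2_lifetime_law Ls"
    using \<alpha> by (intro L2_lifetime_law_of_integrable_powr[OF Ls _ Ls_moment]) simp
  have n_large: "\<And>P. (\<forall>n\<ge>1. P n) \<Longrightarrow> \<forall>\<^sub>F n in sequentially. P n"
    by (auto simp: eventually_sequentially)
  have phi_pointwise: "(\<lambda>n. phi_n n (gam n) (p n) z) \<longlonglongrightarrow> phi z" if "0 < z" for z
    using tendsto_uniform_limitI[OF C1_phi_lim[rule_format, of z], of z] that by simp
  have m_lim: "(\<lambda>n. gam n * (1 - mn n)) \<longlonglongrightarrow> m"
    using convergent_gam_one_minus_mean[OF n_large[OF p_law] n_large[OF gam_pos] gam_lin phi_pointwise tailc]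
    unfolding m_def mn_def by (simp add: convergent_LIMSEQ_iff)
  have defect: "(\<lambda>n. gam n * (1 - lamn n * mn n * etan n)) \<longlonglongrightarrow> b + m"
    using scaled_defect_mult_tendsto[OF gam_inf C1_b m_lim] by (simp add: mult_ac)
  define s where "s = complex_of_real beta - \<i> * of_real u"
  have stable: "0 < (b + m) + lam * sig * Re s"
    using beta(2) C1_lam(2) C1_sig(2) by (simp add: s_def divide_less_eq algebra_simps)
  have branching: "\<forall>n\<ge>1. 0 \<le> lamn n * mn n"
    using lam_pos p_law unfolding mn_def mean_Z_def prob_law_Zplus_def
    by (auto intro!: mult_nonneg_nonneg suminf_nonneg)
  have "(\<lambda>n. laplace (Rky (lamn n) (R n) k y) (s / of_real (gam n)) / of_real (gam n))
      \<longlonglongrightarrow> of_real lam * (\<Sum>j=1..k. of_real (y j)) / (of_real (b + m) + of_real (lam * sig) * s)"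
    using Lam_prob Lam_mom branching R_loc R_eq beta(1) y_nonneg
    by (intro laplace_Rky_rescaled_tendsto[OF _ Ls_law n_large[OF dom] gam_inf C1_lam(1)
          tendsto_1_of_scaled_defect[OF gam_inf m_lim] C1_sig(1)[unfolded sigman_def] defect[unfolded etan_def]
          _ _ stable] n_large)
       (auto simp: L2_lifetime_law_def s_def)
  moreover have "\<forall>\<^sub>F n in sequentially. laplace (Rky (lamn n) (R n) k y) (s / of_real (gam n)) / of_real (gam n)
      = set_lebesgue_integral lborel {0..}
          (\<lambda>t. exp (\<i> * complex_of_real (u * t)) * complex_of_real (Rky_beta beta (gam n) (lamn n) (R n) k y (gam n * t)))"
    using n_large[OF gam_pos] unfolding Rky_beta_def s_def
    by eventually_elim (rule laplace_rescale[symmetric])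
  moreover have "of_real lam * (\<Sum>j=1..k. of_real (y j)) / (of_real (b + m) + of_real (lam * sig) * s)
      = complex_of_real (\<Sum>j=1..k. y j) * set_lebesgue_integral lborel {0..}
          (\<lambda>t. exp (\<i> * complex_of_real (u * t)) * complex_of_real ((1 / sig) * exp (- ((b + m) / (sig * lam) + beta) * t)))"
    using stable C1_lam(2) C1_sig(2)
    by (subst set_integral_oscillating_exp_decay) (auto simp: s_def field_simps complex_eq_iff)
  ultimately show ?thesis by (simp add: Lim_transform_eventually)
qed

end
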